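(* Let $\mathbf{X}\subseteq\mathbb{R}^d$ and fix a time step $k$. Assume: (i) the posterior multi-target process $\Phi_{k-1}$ is an i.i.d. process with cardinality distribution $\rho_{k-1}$ and spatial (probability) distribution $s_{k-1}$, hence with intensity measure $\mu_{k-1}(\cdot)=\big(\sum_{m\ge 0} m\rho_{k-1}(m)\big)s_{k-1}(\cdot)$; (ii) the predicted process is $\Phi_{k|k-1}=\bigcup_{x\in\Phi_{k-1}}\big(\Phi_{\mathrm{s}}(x)\cup\Phi_{\mathrm{b}}(x)\big)$, where, conditionally on $\Phi_{k-1}$, all the processes $\Phi_{\mathrm{s}}(x),\Phi_{\mathrm{b}}(x)$ ($x\in\Phi_{k-1}$) are mutually independent; equivalently the PGFL of $\Phi_{k|k-1}$ is $G_{k|k-1}(h)=G_{k-1}\big(G_{\mathrm{s}}(h|\cdot)\,G_{\mathrm{b}}(h|\cdot)\big)$; (iii) the survival process $\Phi_{\mathrm{s}}(x)$ is a Bernoulli process with parameter $p_{\mathrm{s},k}(x)$ and spatial distribution given by a Markov kernel $f_{\mathrm{s},k}(\cdot|x)$; (iv) there is no spontaneous birth; (v) the spawning process $\Phi_{\mathrm{b}}(x)$ is a zero-inflated Poisson process with parameter $p_{\mathrm{b},k}(x)\in[0,1]$, rate $\lambda_{\mathrm{b},k}(x)\ge0$ and spatial distribution given by a Markov kernel $s_{\mathrm{b},k}(\cdot|x)$. Write $\bar p_{\mathrm{s},k}=1-p_{\mathrm{s},k}$, $\bar p_{\mathrm{b},k}=1-p_{\mathrm{b},k}$, and abbreviate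 $p_{\mathrm{s}}=p_{\mathrm{s},k}(x)$, $p_{\mathrm{b}}=p_{\mathrm{b},k}(x)$, $\lambda=\lambda_{\mathrm{b},k}(x)$ inside integrals. Then the intensity measure of $\Phi_{k|k-1}$ is $$\mu_{k|k-1}(B)=\int\big[p_{\mathrm{s},k}(x)f_{\mathrm{s},k}(B|x)+p_{\mathrm{b},k}(x)\lambda_{\mathrm{b},k}(x)s_{\mathrm{b},k}(B|x)\big]\mu_{k-1}(\mathrm{d}x)$$ for every Borel $B\subseteq\mathbf{X}$, and its cardinality distribution is, for every $n\ge 0$, $$\rho_{k|k-1}(n)=\sum_{j=0}^{n}B_{n,j}(b_1,\ldots,b_{n})\sum_{m\ge j}\frac{m!}{n!\,(m-j)!}\rho_{k-1}(m)\,b_0^{\,m-j},$$ where $b_0=\int \bar p_{\mathrm{s}}\big[\bar p_{\mathrm{b}}+p_{\mathrm{b}}e^{-\lambda}\big]s_{k-1}(\mathrm{d}x)$, $b_1=\int\big[\bar p_{\mathrm{s}}\,p_{\mathrm{b}}e^{-\lambda}\lambda+p_{\mathrm{s}}\big(\bar p_{\mathrm{b}}+p_{\mathrm{b}}e^{-\lambda}\big)\big]s_{k-1}(\mathrm{d}x)$, and for $i\ge2$, $b_i=\int p_{\mathrm{b}}\lambda^{i-1}e^{-\lambda}\big[\bar p_{\mathrm{s}}\lambda+i\,p_{\mathrm{s}}\big]s_{k-1}(\mathrm{d}x)$.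
   Context: A point process on $\mathbf{X}$ is a random finite collection of points of $\mathbf{X}$ (all point processes here are simple). Its cardinality distribution $\rho(n)$ is the probability that it has exactly $n$ points; its intensity measure is $\mu(B)=\mathbb{E}[\text{number of points in }B]$. Its probability generating functional (PGFL) is $G(h)=\mathbb{E}\big[\prod_{x\in\Phi}h(x)\big]$ for measurable $h:\mathbf{X}\to\mathbb{R}$ with $\|h\|_\infty\le 1$. An i.i.d. process with cardinality distribution $\rho$ and spatial probability distribution $s$ has $n$ points with probability $\rho(n)$, the points being i.i.d. with law $s$ given $n$. A Bernoulli process with parameter $p\in[0,1]$ and spatial distribution $s$ is empty with probability $1-p$ and otherwise consists of a single point with law $s$. A zero-inflated Poisson process with parameter $p\in[0,1]$, rate $\lambda\ge0$ and spatial distribution $s$ is the i.i.d. process with spatial distribution $s$ and cardinality distribution $\rho(0)=1-p+pe^{-\lambda}$, $\rho(n)=pe^{-\lambda}\lambda^n/n!$ for $n\ge1$ (i.e. with probability $1-p$ empty, otherwise Poisson with rate $\lambda$). The partial Bell polynomial is $$B_{n,j}(x_1,\ldots,x_n)=\sum\frac{n!}{k_1!(1!)^{k_1}k_2!(2!)^{k_2}\cdots k_n!(n!)^{k_n}}x_1^{k_1}\cdots x_n^{k_n},$$ the sum over nonnegative integers $k_1,\ldots,k_n$ with $k_1+2k_2+\cdots+nk_n=n$ and $k_1+\cdots+k_n=j$; by convention $B_{0,0}=1$ and $B_{n,0}=0$ for $n\ge1$. *)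

theory Defs
  imports "HOL-Probability.Probability"
begin

text \<open>A finite point configuration in the state space (measurable space) X is a finite
multiset of points of X (multiplicities allowed; the processes considered are simple
a.s. whenever the spatial laws are diffuse).\<close>

definition cnt :: "'a set \<Rightarrow> 'a multiset \<Rightarrow> nat" where
  "cnt B M = size (filter_mset (\<lambda>x. x \<in> B) M)"

definition cfg_space :: "'a measure \<Rightarrow> 'a multiset set" where
  "cfg_space X = {M. set_mset M \<subseteq> space X}"

definition cfgM :: "'a measure \<Rightarrow> 'a multiset measure" where
  "cfgM X = sigma (cfg_space X)
     {{M \<in> cfg_space X. cnt B M = n} | B n. B \<in> sets X}"

definition point_process :: "'a measure \<Rightarrow> 'a multiset measure \<Rightarrow> bool" where
  "point_process X P \<longleftrightarrow> prob_space P \<and> sets P = sets (cfgM X)"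

definition pgfl :: "'a multiset measure \<Rightarrow> ('a \<Rightarrow> real) \<Rightarrow> real" where
  "pgfl P h = (\<integral>M. prod_mset (image_mset h M) \<partial>P)"

definition intensity :: "'a multiset measure \<Rightarrow> 'a set \<Rightarrow> ennreal" where
  "intensity P B = (\<integral>\<^sup>+M. of_nat (cnt B M) \<partial>P)"

definition card_dist :: "'a multiset measure \<Rightarrow> nat \<Rightarrow> real" where
  "card_dist P n = measure P {M \<in> space P. size M = n}"

definition iid_law :: "'a measure \<Rightarrow> nat pmf \<Rightarrow> 'a measure \<Rightarrow> 'a multiset measure" where
  "iid_law X rho s = measure_pmf rho \<bind>
     (\<lambda>n. distr (PiM {..<n} (\<lambda>_. s)) (cfgM X) (\<lambda>f. mset (map f [0..<n])))"

definition bernoulli_law :: "'a measure \<Rightarrow> real \<Rightarrow> 'a measure \<Rightarrow> 'a multiset measure" where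
  "bernoulli_law X p s = measure_pmf (bernoulli_pmf p) \<bind>
     (\<lambda>b. if b then distr s (cfgM X) (\<lambda>x. {#x#}) else return (cfgM X) {#})"

definition zip_pmf :: "real \<Rightarrow> real \<Rightarrow> nat pmf" where
  "zip_pmf p lam = embed_pmf (\<lambda>n. if n = 0 then 1 - p + p * exp (- lam)
                                   else p * exp (- lam) * lam ^ n / fact n)"

definition zip_law :: "'a measure \<Rightarrow> real \<Rightarrow> real \<Rightarrow> 'a measure \<Rightarrow> 'a multiset measure" where
  "zip_law X p lam s = iid_law X (zip_pmf p lam) s"

definition bell_partial :: "nat \<Rightarrow> nat \<Rightarrow> (nat \<Rightarrow> real) \<Rightarrow> real" where
  "bell_partial n j x =
     (\<Sum>k \<in> {k. (\<forall>i. i \<notin> {1..n} \<longrightarrow> k i = 0) \<and> (\<forall>i. k i \<le> n) \<and>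
                (\<Sum>i=1..n. i * k i) = n \<and> (\<Sum>i=1..n. k i) = j}.
        fact n / (\<Prod>i=1..n. fact (k i) * fact i ^ k i) * (\<Prod>i=1..n. x i ^ k i))"

end

theory Submission
  imports Defs "HOL-Computational_Algebra.Formal_Power_Series"
begin

text \<open>
  The predicted process places independent offspring around the points of an i.i.d. process, so
  its PGFL at \<open>h\<close> is \<open>\<Sum>\<^sub>m \<rho>(m) c(h)\<^sup>m\<close>, where \<open>c(h)\<close> is the \<open>s\<close>-average of the PGFL of the
  offspring of a single parent.  At a constant \<open>h = z\<close> this is the generating function of the
  cardinality distribution.  Writing the averaged offspring generating function as
  \<open>G(z) = b 0 + C(z)\<close> with \<open>C(z) = \<Sum>\<^sub>i\<^sub>\<ge>\<^sub>1 b i z\<^sup>i / i!\<close>, expanding \<open>G(z)\<^sup>m\<close> binomially and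
  \<open>C(z)\<^sup>j\<close> through partial Bell polynomials, rearranging the nonnegative triple series and comparing
  coefficients gives the cardinality distribution.  For the intensity, \<open>N(B)\<close> is the increasing
  limit of \<open>(1 - (1 - t)\<^bsup>N(B)\<^esup>) / t\<close> as \<open>t\<close> decreases to \<open>0\<close>, and the expectation of this
  quotient is the difference quotient of the PGFL of the predicted process at \<open>1 - t\<cdot>indicator B\<close>;
  its limit is computed on the right-hand side by monotone convergence as well, so no
  finite-mean assumption on \<open>\<rho>\<close> is needed.
\<close>

section \<open>The configuration space\<close>

lemma count_sets_subset_Pow:
  "{{M \<in> cfg_space X. cnt B M = n} | B n. B \<in> sets X} \<subseteq> Pow (cfg_space X)"
  by auto

lemma space_cfgM [simp]: "space (cfgM X) = cfg_space X"
  unfolding cfgM_def by (rule space_measure_of[OF count_sets_subset_Pow])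

lemma sets_cfgM:
  "sets (cfgM X) = sigma_sets (cfg_space X) {{M \<in> cfg_space X. cnt B M = n} | B n. B \<in> sets X}"
  unfolding cfgM_def by (rule sets_measure_of[OF count_sets_subset_Pow])

lemma cnt_level_set_in_sets_cfgM: "B \<in> sets X \<Longrightarrow> {M \<in> cfg_space X. cnt B M = n} \<in> sets (cfgM X)"
  unfolding sets_cfgM by (rule sigma_sets.Basic) blast

lemma measurable_cnt [measurable]: "B \<in> sets X \<Longrightarrow> cnt B \<in> cfgM X \<rightarrow>\<^sub>M count_space UNIV"
proof (subst measurable_count_space_eq2_countable, intro conjI ballI)
  assume B: "B \<in> sets X"
  show "cnt B \<in> space (cfgM X) \<rightarrow> UNIV" by simp
  fix n
  have "cnt B -` {n} \<inter> space (cfgM X) = {M \<in> cfg_space X. cnt B M = n}" by auto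
  then show "cnt B -` {n} \<inter> space (cfgM X) \<in> sets (cfgM X)"
    using B by (simp add: cnt_level_set_in_sets_cfgM)
qed

lemma cnt_empty [simp]: "cnt B {#} = 0"
  by (simp add: cnt_def)

lemma cnt_add_mset [simp]: "cnt B (add_mset x M) = cnt B M + (if x \<in> B then 1 else 0)"
  by (simp add: cnt_def)

lemma empty_in_cfg_space [simp]: "{#} \<in> cfg_space X"
  by (simp add: cfg_space_def)

lemma size_eq_cnt_space: "M \<in> cfg_space X \<Longrightarrow> size M = cnt (space X) M"
proof -
  have "set_mset M \<subseteq> A \<Longrightarrow> size M = cnt A M" for A by (induction M) auto
  then show "M \<in> cfg_space X \<Longrightarrow> size M = cnt (space X) M" by (simp add: cfg_space_def)
qed

lemma prod_mset_image_eq_prod_level_sets: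
  assumes "finite (f ` space X)" and "set_mset M \<subseteq> space X"
  shows "prod_mset (image_mset f M) = (\<Prod>v\<in>f ` space X. v ^ cnt (f -` {v} \<inter> space X) M)"
  using assms(2)
proof (induction M)
  case (add x M)
  then have x: "x \<in> space X" by simp
  have "(\<Prod>v\<in>f ` space X. v ^ cnt (f -` {v} \<inter> space X) (add_mset x M))
      = (\<Prod>v\<in>f ` space X. v ^ cnt (f -` {v} \<inter> space X) M * (if v = f x then v else 1))"
    using x by (intro prod.cong) (auto simp: mult.commute)
  also have "\<dots> = (\<Prod>v\<in>f ` space X. v ^ cnt (f -` {v} \<inter> space X) M) * f x"
    using assms(1) x by (simp add: prod.distrib prod.delta')
  finally show ?case using add by (simp add: mult.commute)
qed simp

lemma measurable_prod_mset_image_simple: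
  fixes f :: "'a \<Rightarrow> real"
  assumes fin: "finite (f ` space X)" and f: "f \<in> borel_measurable X"
  shows "(\<lambda>M. prod_mset (image_mset f M)) \<in> borel_measurable (cfgM X)"
proof -
  have "(\<lambda>M. \<Prod>v\<in>f ` space X. v ^ cnt (f -` {v} \<inter> space X) M) \<in> borel_measurable (cfgM X)"
  proof (intro borel_measurable_prod)
    fix v
    have "f -` {v} \<inter> space X \<in> sets X" using f by measurable
    from measurable_cnt[OF this]
    show "(\<lambda>M. v ^ cnt (f -` {v} \<inter> space X) M) \<in> borel_measurable (cfgM X)"
      by (rule measurable_compose) simp
  qed
  then show ?thesis
    by (rule measurable_cong[THEN iffD1, rotated])
       (simp add: prod_mset_image_eq_prod_level_sets[OF fin] cfg_space_def)
qed

lemma tendsto_prod_mset_image: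
  fixes F :: "nat \<Rightarrow> 'a \<Rightarrow> real"
  shows "(\<And>x. x \<in># M \<Longrightarrow> (\<lambda>k. F k x) \<longlonglongrightarrow> G x) \<Longrightarrow>
    (\<lambda>k. prod_mset (image_mset (F k) M)) \<longlonglongrightarrow> prod_mset (image_mset G M)"
  by (induction M) (auto intro!: tendsto_mult)

lemma dyadic_floor_tendsto: "(\<lambda>k. real_of_int \<lfloor>2^k * y\<rfloor> / 2^k) \<longlonglongrightarrow> (y::real)"
proof (rule tendsto_sandwich)
  show "\<forall>\<^sub>F k in sequentially. y - 1 / 2^k \<le> real_of_int \<lfloor>2^k * y\<rfloor> / 2^k"
  proof (intro always_eventually allI)
    fix k :: nat
    have "(2^k * y - 1) / 2^k \<le> real_of_int \<lfloor>2^k * y\<rfloor> / 2^k"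
      by (intro divide_right_mono) (linarith, simp)
    then show "y - 1 / 2^k \<le> real_of_int \<lfloor>2^k * y\<rfloor> / 2^k"
      by (simp add: diff_divide_distrib)
  qed
  show "\<forall>\<^sub>F k in sequentially. real_of_int \<lfloor>2^k * y\<rfloor> / 2^k \<le> y"
  proof (intro always_eventually allI)
    fix k :: nat
    have "real_of_int \<lfloor>2^k * y\<rfloor> \<le> 2^k * y" by linarith
    then show "real_of_int \<lfloor>2^k * y\<rfloor> / 2^k \<le> y" by (simp add: field_simps)
  qed
  show "(\<lambda>k. y - 1 / 2^k) \<longlonglongrightarrow> y"
    using tendsto_diff[OF tendsto_const LIMSEQ_divide_realpow_zero[of 2 1]] by simp
qed simp

text \<open>Approximate \<open>g\<close> from below by the dyadic step functions \<open>\<lfloor>2\<^sup>k g\<rfloor> / 2\<^sup>k\<close>, which take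
  finitely many values because \<open>g\<close> is bounded.\<close>
lemma measurable_prod_mset_image:
  fixes g :: "'a \<Rightarrow> real"
  assumes g: "g \<in> borel_measurable X" and bnd: "\<And>x. x \<in> space X \<Longrightarrow> 0 \<le> g x \<and> g x \<le> 1"
  shows "(\<lambda>M. prod_mset (image_mset g M)) \<in> borel_measurable (cfgM X)"
proof (rule borel_measurable_LIMSEQ_real)
  define F where "F k x = real_of_int \<lfloor>2^k * g x\<rfloor> / 2^k" for k x
  fix k
  have "F k ` space X \<subseteq> (\<lambda>l. real_of_int l / 2^k) ` {0..2^k}"
  proof
    fix v assume "v \<in> F k ` space X"
    then obtain x where x: "x \<in> space X" "v = F k x" by auto
    have "\<lfloor>2^k * g x\<rfloor> \<le> \<lfloor>(2::real)^k\<rfloor>"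
      using bnd[OF x(1)] by (intro floor_mono) simp
    then show "v \<in> (\<lambda>l. real_of_int l / 2^k) ` {0..2^k}"
      using x bnd[OF x(1)] by (auto simp: F_def)
  qed
  then have "finite (F k ` space X)" by (rule finite_subset) simp
  moreover have "F k \<in> borel_measurable X" unfolding F_def using g by measurable
  ultimately show "(\<lambda>M. prod_mset (image_mset (F k) M)) \<in> borel_measurable (cfgM X)"
    by (rule measurable_prod_mset_image_simple)
next
  fix M
  show "(\<lambda>k. prod_mset (image_mset (\<lambda>x. real_of_int \<lfloor>2^k * g x\<rfloor> / 2^k) M))
      \<longlonglongrightarrow> prod_mset (image_mset g M)"
    by (intro tendsto_prod_mset_image dyadic_floor_tendsto)
qed

lemma mset_map_upt_in_cfg_space:
  "(\<And>i. i < n \<Longrightarrow> f i \<in> space X) \<Longrightarrow> mset (map f [0..<n]) \<in> cfg_space X"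
  unfolding cfg_space_def by auto

lemma cnt_mset_map_upt: "real (cnt B (mset (map f [0..<n]))) = (\<Sum>i<n. indicator B (f i))"
  by (induction n) (auto simp: cnt_def indicator_def)

lemma measurable_mset_map_upt:
  assumes ss: "sets s = sets X"
  shows "(\<lambda>f. mset (map f [0..<n])) \<in> PiM {..<n} (\<lambda>_. s) \<rightarrow>\<^sub>M cfgM X"
  unfolding cfgM_def
proof (rule measurable_measure_of[OF count_sets_subset_Pow])
  have sp: "space s = space X" using ss by (rule sets_eq_imp_space_eq)
  show "(\<lambda>f. mset (map f [0..<n])) \<in> space (Pi\<^sub>M {..<n} (\<lambda>_. s)) \<rightarrow> cfg_space X"
    using sp by (auto simp: space_PiM intro!: mset_map_upt_in_cfg_space simp del: mset_map)
  fix y assume "y \<in> {{M \<in> cfg_space X. cnt B M = k} | B k. B \<in> sets X}"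
  then obtain B k where y: "y = {M \<in> cfg_space X. cnt B M = k}" and B: "B \<in> sets s"
    using ss by auto
  have "(\<lambda>f. mset (map f [0..<n])) -` y \<inter> space (Pi\<^sub>M {..<n} (\<lambda>_. s))
      = {f \<in> space (Pi\<^sub>M {..<n} (\<lambda>_. s)). (\<Sum>i<n. indicator B (f i)) = (real k::real)}"
    using sp unfolding y
    by (auto simp: space_PiM PiE_def Pi_def cnt_mset_map_upt[symmetric] simp del: mset_map mset_upt
             intro!: mset_map_upt_in_cfg_space)
  also have "\<dots> \<in> sets (Pi\<^sub>M {..<n} (\<lambda>_. s))"
    using B by measurable
  finally show "(\<lambda>f. mset (map f [0..<n])) -` y \<inter> space (Pi\<^sub>M {..<n} (\<lambda>_. s))
      \<in> sets (Pi\<^sub>M {..<n} (\<lambda>_. s))" .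
qed

lemma measurable_single_mset:
  assumes ss: "sets s = sets X"
  shows "(\<lambda>x. {#x#}) \<in> s \<rightarrow>\<^sub>M cfgM X"
  unfolding cfgM_def
proof (rule measurable_measure_of[OF count_sets_subset_Pow])
  have sp: "space s = space X" using ss by (rule sets_eq_imp_space_eq)
  show "(\<lambda>x. {#x#}) \<in> space s \<rightarrow> cfg_space X"
    using sp by (auto simp: cfg_space_def)
  fix y assume "y \<in> {{M \<in> cfg_space X. cnt B M = k} | B k. B \<in> sets X}"
  then obtain B k where y: "y = {M \<in> cfg_space X. cnt B M = k}" and B: "B \<in> sets s"
    using ss by auto
  have "(\<lambda>x. {#x#}) -` y \<inter> space s = {x \<in> space s. (indicator B x :: real) = real k}"
    using sp unfolding y by (auto simp: cnt_def cfg_space_def indicator_def)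
  also have "\<dots> \<in> sets s" using B by measurable
  finally show "(\<lambda>x. {#x#}) -` y \<inter> space s \<in> sets s" .
qed

section \<open>Probability generating functionals of the basic processes\<close>

lemma sums_if_ennreal_suminf_eq:
  fixes f :: "nat \<Rightarrow> real"
  assumes "\<And>n. 0 \<le> f n" and "0 \<le> S" and "(\<Sum>n. ennreal (f n)) = ennreal S"
  shows "f sums S"
  using sums_ennreal[OF assms(1,2)] summable_sums[OF summableI[of "\<lambda>n. ennreal (f n)"]] assms(3)
  by simp

lemma pmf_nat_sums_1: "(\<lambda>n. pmf rho (n::nat)) sums 1"
proof (rule sums_if_ennreal_suminf_eq)
  have "(\<integral>\<^sup>+x. 1 \<partial>measure_pmf rho) = (\<integral>\<^sup>+x. ennreal (pmf rho x) * 1 \<partial>count_space UNIV)"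
    by (rule nn_integral_measure_pmf)
  then show "(\<Sum>n. ennreal (pmf rho n)) = ennreal 1"
    by (simp add: nn_integral_count_space_nat measure_pmf.emeasure_space_1)
qed simp_all

lemma summable_pmf_times_power:
  fixes c :: real
  assumes "0 \<le> c" "c \<le> 1"
  shows "summable (\<lambda>n. pmf rho n * c ^ n)"
proof (rule summable_comparison_test'[OF sums_summable[OF pmf_nat_sums_1]])
  show "norm (pmf rho n * c ^ n) \<le> pmf rho n" for n
    using assms by (simp add: mult_left_le power_le_one)
qed

lemma prod_mset_image_nonneg:
  fixes g :: "'a \<Rightarrow> real"
  shows "(\<And>x. x \<in># M \<Longrightarrow> 0 \<le> g x) \<Longrightarrow> 0 \<le> prod_mset (image_mset g M)"
  by (induction M) auto

lemma pgfl_eq_nn_integral: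
  fixes g :: "'a \<Rightarrow> real"
  assumes sP: "sets P = sets (cfgM X)"
    and g: "g \<in> borel_measurable X" and bnd: "\<And>x. x \<in> space X \<Longrightarrow> 0 \<le> g x \<and> g x \<le> 1"
  shows "pgfl P g = enn2real (\<integral>\<^sup>+M. ennreal (prod_mset (image_mset g M)) \<partial>P)"
  unfolding pgfl_def
proof (rule integral_eq_nn_integral)
  show "(\<lambda>M. prod_mset (image_mset g M)) \<in> borel_measurable P"
    unfolding measurable_cong_sets[OF sP refl] by (rule measurable_prod_mset_image[OF g bnd])
  have "space P = cfg_space X" using sets_eq_imp_space_eq[OF sP] by simp
  then show "AE M in P. 0 \<le> prod_mset (image_mset g M)"
    by (intro AE_I2) (auto simp: cfg_space_def intro!: prod_mset_image_nonneg dest: bnd)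
qed

lemma pgfl_cong:
  assumes sP: "sets P = sets (cfgM X)" and eq: "\<And>x. x \<in> space X \<Longrightarrow> g x = g' x"
  shows "pgfl P g = pgfl P g'"
  unfolding pgfl_def
proof (rule Bochner_Integration.integral_cong[OF refl])
  fix M assume "M \<in> space P"
  then have "set_mset M \<subseteq> space X" using sets_eq_imp_space_eq[OF sP] by (simp add: cfg_space_def)
  then show "prod_mset (image_mset g M) = prod_mset (image_mset g' M)"
    by (metis eq image_mset_cong subsetD)
qed

lemma unit_valued_integral:
  fixes g :: "'a \<Rightarrow> real"
  assumes ps: "prob_space s" and ss: "sets s = sets X"
    and g: "g \<in> borel_measurable X" and bnd: "\<And>x. x \<in> space X \<Longrightarrow> 0 \<le> g x \<and> g x \<le> 1"
  shows "integrable s g" "0 \<le> (\<integral>x. g x \<partial>s)" "(\<integral>x. g x \<partial>s) \<le> 1"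
    "(\<integral>\<^sup>+x. ennreal (g x) \<partial>s) = ennreal (\<integral>x. g x \<partial>s)"
proof -
  interpret prob_space s by (rule ps)
  have sp: "space s = space X" using ss by (rule sets_eq_imp_space_eq)
  have gs: "g \<in> borel_measurable s" unfolding measurable_cong_sets[OF ss refl] by (rule g)
  show int: "integrable s g"
    by (rule integrable_const_bound[where B=1, OF AE_I2 gs]) (simp add: sp abs_le_iff bnd)
  show "0 \<le> (\<integral>x. g x \<partial>s)" by (rule integral_nonneg_AE) (auto intro!: AE_I2 simp: sp dest: bnd)
  have "(\<integral>x. g x \<partial>s) \<le> (\<integral>x. 1 \<partial>s)"
    by (rule integral_mono_AE[OF int]) (auto intro!: AE_I2 simp: sp dest: bnd)
  then show "(\<integral>x. g x \<partial>s) \<le> 1" by (simp add: prob_space)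
  show "(\<integral>\<^sup>+x. ennreal (g x) \<partial>s) = ennreal (\<integral>x. g x \<partial>s)"
    by (rule nn_integral_eq_integral[OF int]) (auto intro!: AE_I2 simp: sp dest: bnd)
qed

lemma product_prob_space_const: "prob_space s \<Longrightarrow> product_prob_space (\<lambda>_::nat. s)"
  by (intro product_prob_space.intro product_sigma_finite.intro product_prob_space_axioms.intro)
     (auto intro: prob_space_imp_sigma_finite)

lemma measurable_iid_given_card:
  assumes ps: "prob_space s" and ss: "sets s = sets X"
  shows "(\<lambda>n. distr (PiM {..<n} (\<lambda>_. s)) (cfgM X) (\<lambda>f. mset (map f [0..<n])))
     \<in> measure_pmf rho \<rightarrow>\<^sub>M subprob_algebra (cfgM X)"
proof -
  have "prob_space (distr (PiM {..<n} (\<lambda>_. s)) (cfgM X) (\<lambda>f. mset (map f [0..<n])))" for n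
    by (rule prob_space.prob_space_distr[OF prob_space_PiM measurable_mset_map_upt[OF ss]])
       (use ps in auto)
  then show ?thesis
    by (auto simp: space_subprob_algebra intro: prob_space_imp_subprob_space)
qed

lemma sets_iid_law [simp]:
  assumes "prob_space s" and "sets s = sets X"
  shows "sets (iid_law X rho s) = sets (cfgM X)"
  unfolding iid_law_def by (subst sets_bind) auto

lemma nn_integral_prod_mset_iid_law:
  fixes g :: "'a \<Rightarrow> real"
  assumes ps: "prob_space s" and ss: "sets s = sets X"
    and g: "g \<in> borel_measurable X" and bnd: "\<And>x. x \<in> space X \<Longrightarrow> 0 \<le> g x \<and> g x \<le> 1"
  shows "(\<integral>\<^sup>+M. ennreal (prod_mset (image_mset g M)) \<partial>iid_law X rho s)
       = (\<Sum>n. ennreal (pmf rho n) * (\<integral>\<^sup>+x. ennreal (g x) \<partial>s) ^ n)"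
proof -
  interpret P: product_prob_space "\<lambda>_::nat. s" using ps by (rule product_prob_space_const)
  have sp: "space s = space X" using ss by (rule sets_eq_imp_space_eq)
  have gs: "g \<in> borel_measurable s" unfolding measurable_cong_sets[OF ss refl] by (rule g)
  have pm: "(\<lambda>M. ennreal (prod_mset (image_mset g M))) \<in> borel_measurable (cfgM X)"
    using measurable_prod_mset_image[OF g bnd] by measurable
  have fibre: "(\<integral>\<^sup>+M. ennreal (prod_mset (image_mset g M))
        \<partial>distr (PiM {..<n} (\<lambda>_. s)) (cfgM X) (\<lambda>f. mset (map f [0..<n])))
      = (\<integral>\<^sup>+x. ennreal (g x) \<partial>s) ^ n" for n
  proof -
    have "(\<integral>\<^sup>+M. ennreal (prod_mset (image_mset g M))
        \<partial>distr (PiM {..<n} (\<lambda>_. s)) (cfgM X) (\<lambda>f. mset (map f [0..<n])))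
      = (\<integral>\<^sup>+f. ennreal (prod_mset (image_mset g (mset (map f [0..<n])))) \<partial>PiM {..<n} (\<lambda>_. s))"
      by (rule nn_integral_distr[OF measurable_mset_map_upt[OF ss]])
         (simp add: measurable_cong_sets[OF sets_distr refl] pm)
    also have "\<dots> = (\<integral>\<^sup>+f. (\<Prod>i\<in>{..<n}. ennreal (g (f i))) \<partial>PiM {..<n} (\<lambda>_. s))"
    proof (rule nn_integral_cong)
      fix f assume "f \<in> space (PiM {..<n} (\<lambda>_. s))"
      then have "\<And>i. i < n \<Longrightarrow> 0 \<le> g (f i)" using bnd sp by (auto simp: space_PiM)
      moreover have "prod_mset (image_mset g (mset (map f [0..<n]))) = (\<Prod>i<n. g (f i))"
        by (induction n) (auto simp: mult.commute)
      ultimately show "ennreal (prod_mset (image_mset g (mset (map f [0..<n]))))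
          = (\<Prod>i\<in>{..<n}. ennreal (g (f i)))"
        by (subst prod_ennreal) auto
    qed
    also have "\<dots> = (\<Prod>i\<in>{..<n}. \<integral>\<^sup>+x. ennreal (g x) \<partial>s)"
      by (rule P.product_nn_integral_prod) (use gs in auto)
    finally show ?thesis by simp
  qed
  show ?thesis
    unfolding iid_law_def
    by (simp only: nn_integral_bind[OF pm measurable_iid_given_card[OF ps ss]]
          nn_integral_measure_pmf nn_integral_count_space_nat fibre)
qed

lemma pgfl_iid_law:
  fixes g :: "'a \<Rightarrow> real"
  assumes ps: "prob_space s" and ss: "sets s = sets X"
    and g: "g \<in> borel_measurable X" and bnd: "\<And>x. x \<in> space X \<Longrightarrow> 0 \<le> g x \<and> g x \<le> 1"
  shows "pgfl (iid_law X rho s) g = (\<Sum>n. pmf rho n * (\<integral>x. g x \<partial>s) ^ n)"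
proof -
  note I = unit_valued_integral[OF ps ss g bnd]
  let ?c = "\<integral>x. g x \<partial>s"
  have sm: "summable (\<lambda>n. pmf rho n * ?c ^ n)" using I by (intro summable_pmf_times_power)
  have "(\<Sum>n. ennreal (pmf rho n) * ennreal ?c ^ n) = (\<Sum>n. ennreal (pmf rho n * ?c ^ n))"
    using I by (simp add: ennreal_mult ennreal_power)
  also have "\<dots> = ennreal (\<Sum>n. pmf rho n * ?c ^ n)"
    by (rule suminf_ennreal2) (use I sm in auto)
  finally show ?thesis
    using I by (simp add: pgfl_eq_nn_integral[OF sets_iid_law[OF ps ss] g bnd]
        nn_integral_prod_mset_iid_law[OF ps ss g bnd] suminf_nonneg sm)
qed

definition bernoulli_pgf :: "real \<Rightarrow> real \<Rightarrow> real" where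
  "bernoulli_pgf p z = 1 - p + p * z"

definition zip_pgf :: "real \<Rightarrow> real \<Rightarrow> real \<Rightarrow> real" where
  "zip_pgf p lam z = 1 - p + p * exp (- lam) * exp (lam * z)"

lemma zip_pgf_eq: "zip_pgf p lam z = 1 - p + p * exp (- (lam * (1 - z)))"
  by (simp add: zip_pgf_def mult.assoc algebra_simps flip: exp_add)

lemma measurable_bernoulli_given_coin:
  assumes ps: "prob_space s" and ss: "sets s = sets X"
  shows "(\<lambda>b. if b then distr s (cfgM X) (\<lambda>x. {#x#}) else return (cfgM X) {#})
     \<in> measure_pmf q \<rightarrow>\<^sub>M subprob_algebra (cfgM X)"
proof -
  have "prob_space (distr s (cfgM X) (\<lambda>x. {#x#}))"
    by (rule prob_space.prob_space_distr[OF ps measurable_single_mset[OF ss]])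
  moreover have "prob_space (return (cfgM X) {#})" by (rule prob_space_return) simp
  ultimately show ?thesis
    unfolding measurable_pmf_measure1
    by (intro Pi_I) (auto simp: space_subprob_algebra intro: prob_space_imp_subprob_space)
qed

lemma sets_bernoulli_law [simp]:
  assumes "prob_space s" and "sets s = sets X"
  shows "sets (bernoulli_law X p s) = sets (cfgM X)"
  unfolding bernoulli_law_def by (subst sets_bind) auto

lemma pgfl_bernoulli_law:
  fixes g :: "'a \<Rightarrow> real"
  assumes p: "0 \<le> p" "p \<le> 1" and ps: "prob_space s" and ss: "sets s = sets X"
    and g: "g \<in> borel_measurable X" and bnd: "\<And>x. x \<in> space X \<Longrightarrow> 0 \<le> g x \<and> g x \<le> 1"
  shows "pgfl (bernoulli_law X p s) g = bernoulli_pgf p (\<integral>x. g x \<partial>s)"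
proof -
  note I = unit_valued_integral[OF ps ss g bnd]
  have pm: "(\<lambda>M. ennreal (prod_mset (image_mset g M))) \<in> borel_measurable (cfgM X)"
    using measurable_prod_mset_image[OF g bnd] by measurable
  have single: "(\<integral>\<^sup>+M. ennreal (prod_mset (image_mset g M)) \<partial>distr s (cfgM X) (\<lambda>x. {#x#}))
      = ennreal (\<integral>x. g x \<partial>s)"
    by (subst nn_integral_distr[OF measurable_single_mset[OF ss]])
       (simp_all add: measurable_cong_sets[OF sets_distr refl] pm I(4))
  have empty: "(\<integral>\<^sup>+M. ennreal (prod_mset (image_mset g M)) \<partial>return (cfgM X) {#}) = 1"
    by (subst nn_integral_return) (auto simp: pm)
  have "(\<integral>\<^sup>+M. ennreal (prod_mset (image_mset g M)) \<partial>bernoulli_law X p s)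
      = ennreal (1 - p) + ennreal p * ennreal (\<integral>x. g x \<partial>s)"
    unfolding bernoulli_law_def
    using p by (simp add: nn_integral_bind[OF pm measurable_bernoulli_given_coin[OF ps ss]]
        nn_integral_measure_pmf nn_integral_count_space_finite UNIV_bool single empty mult.commute)
  also have "\<dots> = ennreal (1 - p + p * (\<integral>x. g x \<partial>s))"
    using p I(2) by (simp add: ennreal_plus ennreal_mult)
  finally show ?thesis
    using p I(2) by (simp add: pgfl_eq_nn_integral[OF sets_bernoulli_law[OF ps ss] g bnd] bernoulli_pgf_def
        del: ennreal_plus)
qed

definition zip_prob :: "real \<Rightarrow> real \<Rightarrow> nat \<Rightarrow> real" where
  "zip_prob p lam n = (if n = 0 then 1 - p + p * exp (- lam) else p * exp (- lam) * lam ^ n / fact n)"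

lemma zip_prob_power_sums: "(\<lambda>n. zip_prob p lam n * z ^ n) sums zip_pgf p lam z"
proof -
  have "(\<lambda>n. (lam * z) ^ n / fact n) sums exp (lam * z)"
    using exp_converges[of "lam * z"] by (simp add: divide_inverse mult.commute)
  then have "(\<lambda>n. (if n = 0 then 1 - p else 0) + p * exp (- lam) * ((lam * z) ^ n / fact n))
      sums ((1 - p) + p * exp (- lam) * exp (lam * z))"
    by (intro sums_add sums_mult) (rule sums_single[where f="\<lambda>_. 1 - p" and i=0])
  moreover have "(\<lambda>n. (if n = 0 then 1 - p else 0) + p * exp (- lam) * ((lam * z) ^ n / fact n))
      = (\<lambda>n. zip_prob p lam n * z ^ n)"
    by (auto simp: zip_prob_def power_mult_distrib)
  ultimately show ?thesis by (simp add: zip_pgf_def)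
qed

lemma pmf_zip_pmf:
  assumes "0 \<le> p" "p \<le> 1" "0 \<le> lam"
  shows "pmf (zip_pmf p lam) n = zip_prob p lam n"
proof -
  have nonneg: "0 \<le> zip_prob p lam n" for n
    using assms by (auto simp: zip_prob_def intro: add_nonneg_nonneg)
  have "zip_prob p lam sums 1"
    using zip_prob_power_sums[of p lam 1] by (simp add: zip_pgf_eq)
  then have "(\<integral>\<^sup>+n. ennreal (zip_prob p lam n) \<partial>count_space UNIV) = 1"
    using suminf_ennreal_eq[OF nonneg] by (simp add: nn_integral_count_space_nat)
  moreover have "zip_pmf p lam = embed_pmf (zip_prob p lam)"
    unfolding zip_pmf_def zip_prob_def ..
  ultimately show ?thesis
    using nonneg by (simp add: pmf_embed_pmf)
qed

lemma pgfl_zip_law: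
  fixes g :: "'a \<Rightarrow> real"
  assumes p: "0 \<le> p" "p \<le> 1" and lam: "0 \<le> lam" and ps: "prob_space s" and ss: "sets s = sets X"
    and g: "g \<in> borel_measurable X" and bnd: "\<And>x. x \<in> space X \<Longrightarrow> 0 \<le> g x \<and> g x \<le> 1"
  shows "pgfl (zip_law X p lam s) g = zip_pgf p lam (\<integral>x. g x \<partial>s)"
  using pgfl_iid_law[OF ps ss g bnd, of "zip_pmf p lam"] sums_unique[OF zip_prob_power_sums]
  unfolding zip_law_def by (simp add: pmf_zip_pmf[OF p lam])

lemma nn_integral_power_size:
  assumes pp: "point_process X P" and z: "0 \<le> z"
  shows "(\<integral>\<^sup>+M. ennreal (z ^ size M) \<partial>P) = (\<Sum>n. ennreal (card_dist P n * z ^ n))"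
proof -
  have sP: "sets P = sets (cfgM X)" using pp by (auto simp: point_process_def)
  interpret prob_space P using pp by (simp add: point_process_def)
  have spP: "space P = cfg_space X" using sets_eq_imp_space_eq[OF sP] by simp
  define A where "A n = {M \<in> space P. size M = n}" for n
  have "A n = {M \<in> cfg_space X. cnt (space X) M = n}" for n
    unfolding A_def spP using size_eq_cnt_space by auto
  then have A_sets: "A n \<in> sets P" for n unfolding sP by (simp add: cnt_level_set_in_sets_cfgM)
  have "(\<integral>\<^sup>+M. ennreal (z ^ size M) \<partial>P) = (\<integral>\<^sup>+M. (\<Sum>n. ennreal (z ^ n) * indicator (A n) M) \<partial>P)"
  proof (rule nn_integral_cong)
    fix M assume M: "M \<in> space P"
    have "(\<Sum>n. ennreal (z ^ n) * indicator (A n) M) = (\<Sum>n\<in>{size M}. ennreal (z ^ n) * indicator (A n) M)"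
      by (rule suminf_finite) (auto simp: A_def)
    then show "ennreal (z ^ size M) = (\<Sum>n. ennreal (z ^ n) * indicator (A n) M)"
      using M by (simp add: A_def)
  qed
  also have "\<dots> = (\<Sum>n. \<integral>\<^sup>+M. ennreal (z ^ n) * indicator (A n) M \<partial>P)"
    by (rule nn_integral_suminf) (use A_sets in auto)
  also have "\<dots> = (\<Sum>n. ennreal (card_dist P n * z ^ n))"
  proof (rule suminf_cong)
    fix n
    have "(\<integral>\<^sup>+M. ennreal (z ^ n) * indicator (A n) M \<partial>P) = ennreal (z ^ n) * emeasure P (A n)"
      by (rule nn_integral_cmult_indicator[OF A_sets])
    then show "(\<integral>\<^sup>+M. ennreal (z ^ n) * indicator (A n) M \<partial>P) = ennreal (card_dist P n * z ^ n)"
      using z by (simp add: emeasure_eq_measure card_dist_def A_def ennreal_mult[symmetric] mult.commute)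
  qed
  finally show ?thesis .
qed

lemma pgfl_const_sums_card_dist:
  assumes pp: "point_process X P" and z: "0 \<le> z" "z \<le> 1"
  shows "(\<lambda>n. card_dist P n * z ^ n) sums pgfl P (\<lambda>_. z)"
proof (rule sums_if_ennreal_suminf_eq)
  have sP: "sets P = sets (cfgM X)" using pp by (auto simp: point_process_def)
  interpret prob_space P using pp by (simp add: point_process_def)
  show "0 \<le> card_dist P n * z ^ n" for n using z by (simp add: card_dist_def)
  show "0 \<le> pgfl P (\<lambda>_. z)"
    unfolding pgfl_def using z by (intro integral_nonneg_AE AE_I2) (simp add: prod_mset_constant)
  have "pgfl P (\<lambda>_. z) = enn2real (\<integral>\<^sup>+M. ennreal (z ^ size M) \<partial>P)"
    using pgfl_eq_nn_integral[OF sP, of "\<lambda>_. z"] z by (simp add: prod_mset_constant)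
  moreover have "(\<integral>\<^sup>+M. ennreal (z ^ size M) \<partial>P) \<le> (\<integral>\<^sup>+M. 1 \<partial>P)"
    using z by (intro nn_integral_mono) (simp add: power_le_one)
  then have "(\<integral>\<^sup>+M. ennreal (z ^ size M) \<partial>P) \<noteq> \<top>"
    by (metis emeasure_space_1 ennreal_one_neq_top nn_integral_const mult_1 top_unique)
  ultimately show "(\<Sum>n. ennreal (card_dist P n * z ^ n)) = ennreal (pgfl P (\<lambda>_. z))"
    using nn_integral_power_size[OF pp z(1)] by (simp add: ennreal_enn2real_if)
qed

section \<open>Partial Bell polynomials as coefficients of powers of a power series\<close>

text \<open>The index set of \<open>bell_partial\<close>: multiplicity vectors \<open>k\<close> of the partitions of
  \<open>n\<close> into \<open>j\<close> blocks (\<open>k i\<close> blocks of size \<open>i\<close>).\<close>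
definition partition_types :: "nat \<Rightarrow> nat \<Rightarrow> (nat \<Rightarrow> nat) set" where
  "partition_types n j = {k. (\<forall>i. i \<notin> {1..n} \<longrightarrow> k i = 0) \<and> (\<forall>i. k i \<le> n) \<and>
                (\<Sum>i=1..n. i * k i) = n \<and> (\<Sum>i=1..n. k i) = j}"

definition type_weight :: "nat \<Rightarrow> (nat \<Rightarrow> real) \<Rightarrow> (nat \<Rightarrow> nat) \<Rightarrow> real" where
  "type_weight n c k = (\<Prod>i=1..n. c i ^ k i / fact (k i))"

definition type_sum :: "(nat \<Rightarrow> real) \<Rightarrow> nat \<Rightarrow> nat \<Rightarrow> real" where
  "type_sum c n j = (\<Sum>k\<in>partition_types n j. type_weight n c k)"

lemma partition_types_iff:
  "k \<in> partition_types n j \<longleftrightarrow>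
     (\<forall>i. i \<notin> {1..n} \<longrightarrow> k i = 0) \<and> (\<Sum>i=1..n. i * k i) = n \<and> (\<Sum>i=1..n. k i) = j"
proof -
  have "k i \<le> n" if "\<forall>i. i \<notin> {1..n} \<longrightarrow> k i = 0" "(\<Sum>i=1..n. i * k i) = n" for i
  proof (cases "i \<in> {1..n}")
    case True
    then have "k i \<le> i * k i" by simp
    also have "\<dots> \<le> (\<Sum>i=1..n. i * k i)" using True by (intro member_le_sum) auto
    finally show ?thesis using that by simp
  qed (use that in simp)
  then show ?thesis unfolding partition_types_def by blast
qed

lemma finite_partition_types: "finite (partition_types n j)"
proof (rule finite_subset)
  show "partition_types n j \<subseteq> {k. \<forall>x. (x \<in> {1..n} \<longrightarrow> k x \<in> {0..n}) \<and> (x \<notin> {1..n} \<longrightarrow> k x = 0)}"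
    by (auto simp: partition_types_def)
qed (rule finite_set_of_finite_funs; simp)

lemma partition_types_0: "partition_types n 0 = (if n = 0 then {\<lambda>_. 0} else {})"
  by (auto simp: partition_types_iff fun_eq_iff)

lemma partition_types_eq_empty:
  assumes "n < j" shows "partition_types n j = {}"
proof (rule equals0I)
  fix k assume k: "k \<in> partition_types n j"
  have "(\<Sum>i=1..n. k i) \<le> (\<Sum>i=1..n. i * k i)" by (intro sum_mono) auto
  with k assms show False by (simp add: partition_types_iff)
qed

lemma bell_partial_eq_type_sum: "bell_partial n j x = fact n * type_sum (\<lambda>i. x i / fact i) n j"
proof -
  have "(\<Prod>i\<in>A. (x i / fact i) ^ k i / fact (k i))
      = (\<Prod>i\<in>A. x i ^ k i) / (\<Prod>i\<in>A. fact (k i) * fact i ^ k i)" for A and k :: "nat \<Rightarrow> nat"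
    by (simp add: prod_dividef[symmetric] power_divide mult.commute)
  then show ?thesis
    unfolding bell_partial_def type_sum_def type_weight_def partition_types_def sum_distrib_left
    by (intro sum.cong refl) simp
qed

lemma type_sum_nonneg: "(\<And>i. 0 \<le> c i) \<Longrightarrow> 0 \<le> type_sum c n j"
  unfolding type_sum_def type_weight_def by (intro sum_nonneg prod_nonneg divide_nonneg_nonneg) auto

lemma type_weight_eq_on_support:
  assumes "\<forall>i. i \<notin> {1..m} \<longrightarrow> k i = 0" "m \<le> n"
  shows "type_weight n c k = type_weight m c k"
  unfolding type_weight_def by (rule prod.mono_neutral_right) (use assms in auto)

lemma type_weight_remove_part:
  assumes i: "i \<in> {1..n}" and ki: "k i = Suc m"
  shows "real (k i) * type_weight n c k = c i * type_weight n c (k(i := m))"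
proof -
  define P where "P = (\<Prod>l\<in>{1..n} - {i}. c l ^ k l / fact (k l))"
  have "type_weight n c k = c i ^ Suc m / fact (Suc m) * P"
    unfolding type_weight_def P_def using i ki by (subst prod.remove[of _ i]) auto
  moreover have "type_weight n c (k(i := m)) = c i ^ m / fact m * P"
    unfolding type_weight_def P_def using i by (subst prod.remove[of _ i]) (auto intro!: prod.cong)
  moreover have "real (Suc m) * (c i ^ Suc m / fact (Suc m)) = c i * (c i ^ m / fact m)"
    unfolding fact_Suc by (simp add: field_simps del: of_nat_Suc)
  ultimately show ?thesis
    using ki by (simp only: mult.assoc[symmetric])
qed

lemma sum_fun_upd_Suc:
  fixes g k :: "nat \<Rightarrow> nat"
  assumes "finite A" "i \<in> A"
  shows "(\<Sum>l\<in>A. g l * (k(i := Suc (k i))) l) = (\<Sum>l\<in>A. g l * k l) + g i"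
  using assms by (simp add: sum.remove[of A i] sum.cong[of "A - {i}" _ "\<lambda>l. g l * (k(i := Suc (k i))) l"])

lemma sum_atLeastAtMost_eq_on_support:
  fixes g :: "nat \<Rightarrow> nat"
  shows "\<forall>l. l \<notin> {1..m} \<longrightarrow> g l = 0 \<Longrightarrow> m \<le> n \<Longrightarrow> (\<Sum>l=1..n. g l) = (\<Sum>l=1..m. g l)"
  by (rule sum.mono_neutral_right) auto

lemma add_block_in_partition_types:
  assumes b: "b \<in> partition_types (n - i) j" and i: "i \<in> {1..n}"
  shows "b(i := Suc (b i)) \<in> partition_types n (Suc j)"
proof -
  from b have supp: "\<forall>l. l \<notin> {1..n-i} \<longrightarrow> b l = 0" unfolding partition_types_iff by blast
  then have "(\<Sum>l=1..n. l * b l) = n - i" "(\<Sum>l=1..n. b l) = j"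
    using b sum_atLeastAtMost_eq_on_support[of "n - i" "\<lambda>l. l * b l" n]
      sum_atLeastAtMost_eq_on_support[of "n - i" b n]
    by (auto simp: partition_types_iff)
  then show ?thesis
    using i supp sum_fun_upd_Suc[of "{1..n}" i "\<lambda>l. l" b] sum_fun_upd_Suc[of "{1..n}" i "\<lambda>_. 1" b]
    by (auto simp: partition_types_iff)
qed

lemma remove_block_in_partition_types:
  assumes a: "a \<in> partition_types n (Suc j)" "1 \<le> a i" and i: "i \<in> {1..n}"
  shows "a(i := a i - 1) \<in> partition_types (n - i) j"
proof -
  define d where "d = a(i := a i - 1)"
  have "a = d(i := Suc (d i))" using a(2) by (auto simp: d_def)
  then have weight: "(\<Sum>l=1..n. l * d l) = n - i" and blocks: "(\<Sum>l=1..n. d l) = j"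
    using a(1) i sum_fun_upd_Suc[of "{1..n}" i "\<lambda>l. l" d] sum_fun_upd_Suc[of "{1..n}" i "\<lambda>_. 1" d]
    by (auto simp: partition_types_iff)
  have supp: "\<forall>l. l \<notin> {1..n-i} \<longrightarrow> d l = 0"
  proof (intro allI impI)
    fix l assume l: "l \<notin> {1..n-i}"
    show "d l = 0"
    proof (cases "l \<in> {1..n}")
      case True
      have "l * d l \<le> (\<Sum>l=1..n. l * d l)" using True by (intro member_le_sum) auto
      then show ?thesis using l True weight by (cases "d l") auto
    next
      case False
      then show ?thesis using a(1) i by (auto simp: d_def partition_types_iff)
    qed
  qed
  then have "d \<in> partition_types (n - i) j"
    using weight blocks sum_atLeastAtMost_eq_on_support[of "n - i" "\<lambda>l. l * d l" n]
      sum_atLeastAtMost_eq_on_support[of "n - i" d n]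
    by (simp add: partition_types_iff)
  then show ?thesis by (simp add: d_def)
qed

lemma add_block_bij_betw:
  assumes i: "i \<in> {1..n}"
  shows "bij_betw (\<lambda>k. k(i := Suc (k i))) (partition_types (n - i) j)
           {k \<in> partition_types n (Suc j). 1 \<le> k i}"
  by (rule bij_betw_byWitness[where f'="\<lambda>k. k(i := k i - 1)"])
     (use add_block_in_partition_types[OF _ i] remove_block_in_partition_types[OF _ _ i] in
       \<open>auto simp del: One_nat_def\<close>)

lemma type_sum_Suc: "real (Suc j) * type_sum c n (Suc j) = (\<Sum>i=1..n. c i * type_sum c (n - i) j)"
proof -
  have "real (Suc j) * type_sum c n (Suc j)
      = (\<Sum>k\<in>partition_types n (Suc j). real (\<Sum>i=1..n. k i) * type_weight n c k)"
    unfolding type_sum_def sum_distrib_left by (intro sum.cong refl) (simp add: partition_types_iff)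
  also have "\<dots> = (\<Sum>k\<in>partition_types n (Suc j). \<Sum>i=1..n. real (k i) * type_weight n c k)"
    by (simp add: sum_distrib_right)
  also have "\<dots> = (\<Sum>i=1..n. \<Sum>k\<in>{k \<in> partition_types n (Suc j). 1 \<le> k i}. real (k i) * type_weight n c k)"
    by (subst sum.swap) (intro sum.cong refl sum.mono_neutral_right; auto simp: finite_partition_types)
  also have "\<dots> = (\<Sum>i=1..n. c i * type_sum c (n - i) j)"
  proof (rule sum.cong[OF refl])
    fix i assume i: "i \<in> {1..n}"
    have "(\<Sum>k\<in>{k \<in> partition_types n (Suc j). 1 \<le> k i}. real (k i) * type_weight n c k)
        = (\<Sum>b\<in>partition_types (n - i) j. real (Suc (b i)) * type_weight n c (b(i := Suc (b i))))"
      by (simp only: sum.reindex_bij_betw[OF add_block_bij_betw[OF i], symmetric] fun_upd_same)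
    also have "\<dots> = (\<Sum>b\<in>partition_types (n - i) j. c i * type_weight (n - i) c b)"
    proof (intro sum.cong refl)
      fix b assume b: "b \<in> partition_types (n - i) j"
      have "real (Suc (b i)) * type_weight n c (b(i := Suc (b i))) = c i * type_weight n c b"
        using type_weight_remove_part[OF i, of "b(i := Suc (b i))" "b i" c] by simp
      also have "type_weight n c b = type_weight (n - i) c b"
        using b by (intro type_weight_eq_on_support) (auto simp: partition_types_def)
      finally show "real (Suc (b i)) * type_weight n c (b(i := Suc (b i))) = c i * type_weight (n - i) c b" .
    qed
    finally show "(\<Sum>k\<in>{k \<in> partition_types n (Suc j). 1 \<le> k i}. real (k i) * type_weight n c k)
        = c i * type_sum c (n - i) j"
      by (simp add: type_sum_def sum_distrib_left)
  qed
  finally show ?thesis .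
qed

definition fps_from_one :: "(nat \<Rightarrow> real) \<Rightarrow> real fps" where
  "fps_from_one c = Abs_fps (\<lambda>i. if i = 0 then 0 else c i)"

lemma fps_nth_fps_from_one: "fps_nth (fps_from_one c) i = (if i = 0 then 0 else c i)"
  by (simp add: fps_from_one_def)

lemma fps_nth_power_fps_from_one: "fps_nth (fps_from_one c ^ j) n = fact j * type_sum c n j"
proof (induction j arbitrary: n)
  case 0
  then show ?case by (simp add: type_sum_def partition_types_0 type_weight_def)
next
  case (Suc j)
  have "fps_nth (fps_from_one c ^ Suc j) n
      = (\<Sum>i=0..n. fps_nth (fps_from_one c) i * fps_nth (fps_from_one c ^ j) (n - i))"
    by (simp add: fps_mult_nth)
  also have "\<dots> = (\<Sum>i=1..n. c i * (fact j * type_sum c (n - i) j))"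
    by (subst sum.atLeast_Suc_atMost) (auto simp: fps_nth_fps_from_one Suc.IH)
  also have "\<dots> = fact j * (real (Suc j) * type_sum c n (Suc j))"
    unfolding type_sum_Suc sum_distrib_left by (simp add: mult.left_commute)
  also have "\<dots> = fact (Suc j) * type_sum c n (Suc j)" by simp
  finally show ?case .
qed

lemma fps_nth_power_bell_partial:
  "fps_nth (fps_from_one (\<lambda>i. b i / fact i) ^ j) n = fact j / fact n * bell_partial n j b"
  by (simp add: fps_nth_power_fps_from_one bell_partial_eq_type_sum)

lemma bell_partial_eq_0: "n < j \<Longrightarrow> bell_partial n j b = 0"
  by (simp add: bell_partial_eq_type_sum type_sum_def partition_types_eq_empty)

lemma bell_partial_nonneg: "(\<And>i. 0 \<le> b i) \<Longrightarrow> 0 \<le> bell_partial n j b"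
  by (simp add: bell_partial_eq_type_sum type_sum_nonneg)

section \<open>Composition of generating functions with nonnegative coefficients\<close>

lemma sums_fps_power:
  fixes F :: "real fps"
  assumes nn: "\<And>i. 0 \<le> fps_nth F i" and z: "0 \<le> z"
    and S: "(\<lambda>i. fps_nth F i * z ^ i) sums S"
  shows "(\<lambda>n. fps_nth (F ^ j) n * z ^ n) sums (S ^ j)"
proof -
  have "(\<lambda>n. fps_nth (F ^ j) n * z ^ n) sums (S ^ j) \<and> (\<forall>n. 0 \<le> fps_nth (F ^ j) n)"
  proof (induction j)
    case 0
    have "(\<lambda>n. fps_nth (F ^ 0) n * z ^ n) = (\<lambda>n. if n = 0 then 1 else 0)"
      by (auto simp: fun_eq_iff)
    moreover have "(\<lambda>n::nat. if n = 0 then (1::real) else 0) sums 1"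
      using sums_single[where f="\<lambda>_. 1::real" and i=0] by simp
    ultimately show ?case by simp
  next
    case (Suc j)
    then have IH: "(\<lambda>n. fps_nth (F ^ j) n * z ^ n) sums (S ^ j)"
      and nnj: "\<And>n. 0 \<le> fps_nth (F ^ j) n" by auto
    have "(\<lambda>k. \<Sum>i\<le>k. (fps_nth F i * z ^ i) * (fps_nth (F ^ j) (k - i) * z ^ (k - i)))
        sums ((\<Sum>k. fps_nth F k * z ^ k) * (\<Sum>k. fps_nth (F ^ j) k * z ^ k))"
      by (rule Cauchy_product_sums) (use S IH nn nnj z in \<open>simp_all add: sums_summable\<close>)
    moreover have "(\<Sum>i\<le>k. (fps_nth F i * z ^ i) * (fps_nth (F ^ j) (k - i) * z ^ (k - i)))
        = fps_nth (F ^ Suc j) k * z ^ k" for k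
    proof -
      have "(\<Sum>i\<le>k. (fps_nth F i * z ^ i) * (fps_nth (F ^ j) (k - i) * z ^ (k - i)))
          = (\<Sum>i\<le>k. fps_nth F i * fps_nth (F ^ j) (k - i) * z ^ k)"
        by (intro sum.cong refl) (simp add: mult_ac flip: power_add)
      then show ?thesis by (simp add: fps_mult_nth atLeast0AtMost sum_distrib_right)
    qed
    ultimately have "(\<lambda>k. fps_nth (F ^ Suc j) k * z ^ k) sums (S * S ^ j)"
      using sums_unique[OF S] sums_unique[OF IH] by simp
    moreover have "\<forall>n. 0 \<le> fps_nth (F ^ Suc j) n"
      using nn nnj by (simp add: fps_mult_nth sum_nonneg)
    ultimately show ?case by simp
  qed
  then show ?thesis ..
qed

lemma sums_binomial_fps_power:
  fixes F :: "real fps"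
  assumes "\<And>i. 0 \<le> fps_nth F i" "0 \<le> z" "(\<lambda>i. fps_nth F i * z ^ i) sums y"
  shows "(\<lambda>n. (\<Sum>j\<le>m. of_nat (m choose j) * a ^ (m - j) * fps_nth (F ^ j) n) * z ^ n)
           sums ((y + a) ^ m)"
proof -
  have "(\<lambda>n. \<Sum>j\<le>m. of_nat (m choose j) * a ^ (m - j) * (fps_nth (F ^ j) n * z ^ n))
      sums (\<Sum>j\<le>m. of_nat (m choose j) * a ^ (m - j) * y ^ j)"
    by (intro sums_sum sums_mult sums_fps_power assms)
  then show ?thesis
    by (simp add: binomial_ring[of y a m] sum_distrib_left sum_distrib_right mult_ac)
qed

lemma powser_zero_imp_coeff_zero:
  fixes e :: "nat \<Rightarrow> real"
  assumes r: "0 < r" and S: "\<And>z. 0 < z \<Longrightarrow> z < r \<Longrightarrow> (\<lambda>n. e n * z ^ n) sums 0"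
  shows "e n = 0"
proof (induction n rule: less_induct)
  case (less n)
  define F where "F w = (\<Sum>k. e (k + n) * w ^ k)" for w :: real
  have shifted: "(\<lambda>k. e (k + n) * z ^ k) sums 0" if z: "0 < z" "z < r" for z
  proof -
    have "(\<lambda>k. e (k + n) * z ^ (k + n)) sums (0 - (\<Sum>m<n. e m * z ^ m))"
      using sums_split_initial_segment[OF S[OF z], of n] by simp
    also have "(\<Sum>m<n. e m * z ^ m) = 0" using less by simp
    finally have "(\<lambda>k. e (k + n) * z ^ (k + n) * inverse (z ^ n)) sums (0 * inverse (z ^ n))"
      by (intro sums_mult2) simp
    moreover have "(\<lambda>k. e (k + n) * z ^ (k + n) * inverse (z ^ n)) = (\<lambda>k. e (k + n) * z ^ k)"
      using z by (auto simp: fun_eq_iff power_add)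
    ultimately show ?thesis by simp
  qed
  have "summable (\<lambda>k. e (k + n) * (r / 2) ^ k)" using shifted[of "r / 2"] r by (simp add: sums_summable)
  then have "isCont F 0" unfolding F_def by (rule isCont_powser) (use r in simp)
  then have "(F \<longlongrightarrow> F 0) (at_right 0)"
    by (simp add: isCont_def filterlim_at_split)
  moreover have "eventually (\<lambda>w. F w = 0) (at_right 0)"
    unfolding eventually_at_right_field
    by (rule exI[where x=r]) (use r shifted in \<open>auto simp: F_def sums_iff\<close>)
  then have "(F \<longlongrightarrow> 0) (at_right 0)" by (rule tendsto_eventually)
  ultimately have "F 0 = 0" by (rule tendsto_unique[OF trivial_limit_at_right_real])
  then show ?case by (simp add: F_def)
qed

lemma ennreal_suminf_swap: "(\<Sum>m. \<Sum>n. f m n :: ennreal) = (\<Sum>n. \<Sum>m. f m n)"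
proof -
  have "(\<Sum>m. \<Sum>n. f m n) = (\<integral>\<^sup>+m. (\<Sum>n. f m n) \<partial>count_space UNIV)"
    by (simp add: nn_integral_count_space_nat)
  also have "\<dots> = (\<Sum>n. \<integral>\<^sup>+m. f m n \<partial>count_space UNIV)"
    by (rule nn_integral_suminf) simp
  finally show ?thesis
    by (simp add: nn_integral_count_space_nat)
qed

text \<open>The coefficient of \<open>z\<^sup>n\<close> in \<open>\<Sum>\<^sub>m r m (b 0 + C(z))\<^sup>m\<close>, \<open>C(z) = \<Sum>\<^sub>i\<^sub>\<ge>\<^sub>1 b i z\<^sup>i / i!\<close>, is
  \<open>\<Sum>\<^sub>j\<^sub>\<le>\<^sub>n bell_partial n j b * (\<Sum>\<^sub>m composition_term r (b 0) n j m)\<close>.\<close>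
definition composition_term :: "(nat \<Rightarrow> real) \<Rightarrow> real \<Rightarrow> nat \<Rightarrow> nat \<Rightarrow> nat \<Rightarrow> real" where
  "composition_term r a n j m =
     (if j \<le> m then fact m / (fact n * fact (m - j)) * r m * a ^ (m - j) else 0)"

lemma composition_term_nonneg: "0 \<le> r m \<Longrightarrow> 0 \<le> a \<Longrightarrow> 0 \<le> composition_term r a n j m"
  by (simp add: composition_term_def)

lemma binomial_bell_coeff:
  "r m * (\<Sum>j\<le>m. of_nat (m choose j) * a ^ (m - j) * fps_nth (fps_from_one (\<lambda>i. b i / fact i) ^ j) n)
     = (\<Sum>j\<le>n. bell_partial n j b * composition_term r a n j m)"
proof -
  have "r m * (\<Sum>j\<le>m. of_nat (m choose j) * a ^ (m - j) * fps_nth (fps_from_one (\<lambda>i. b i / fact i) ^ j) n)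
      = (\<Sum>j\<le>m + n. bell_partial n j b * composition_term r a n j m)"
    unfolding sum_distrib_left
    by (intro sum.mono_neutral_cong_left)
       (auto simp: fps_nth_power_bell_partial composition_term_def binomial_fact bell_partial_eq_0 mult_ac)
  also have "\<dots> = (\<Sum>j\<le>n. bell_partial n j b * composition_term r a n j m)"
    by (intro sum.mono_neutral_cong_right) (auto simp: bell_partial_eq_0)
  finally show ?thesis .
qed

lemma ennreal_suminf_composition:
  fixes r b :: "nat \<Rightarrow> real"
  assumes b: "\<And>i. 0 \<le> b i" and r: "\<And>m. 0 \<le> r m"
    and G: "(\<lambda>i. b i / fact i * z ^ i) sums G" and summable: "summable (\<lambda>m. r m * G ^ m)"
    and z: "0 \<le> z"
  shows "ennreal (\<Sum>m. r m * G ^ m) =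
    (\<Sum>n. ennreal (z ^ n) * (\<Sum>m. ennreal (\<Sum>j\<le>n. bell_partial n j b * composition_term r (b 0) n j m)))"
proof -
  define C where "C = fps_from_one (\<lambda>i. b i / fact i)"
  define w where "w n m = (\<Sum>j\<le>n. bell_partial n j b * composition_term r (b 0) n j m)" for n m
  have w: "0 \<le> w n m" for n m
    unfolding w_def using b r by (intro sum_nonneg mult_nonneg_nonneg bell_partial_nonneg composition_term_nonneg)
  have C: "\<And>i. 0 \<le> fps_nth C i" using b by (simp add: C_def fps_nth_fps_from_one)
  have "(\<lambda>i. b i / fact i * z ^ i - (if i = 0 then b 0 else 0)) sums (G - b 0)"
    by (rule sums_diff[OF G]) (rule sums_single)
  moreover have "(\<lambda>i. b i / fact i * z ^ i - (if i = 0 then b 0 else 0)) = (\<lambda>i. fps_nth C i * z ^ i)"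
    by (auto simp: fun_eq_iff C_def fps_nth_fps_from_one)
  ultimately have CG: "(\<lambda>i. fps_nth C i * z ^ i) sums (G - b 0)" by simp
  have "0 \<le> (\<Sum>i. fps_nth C i * z ^ i)"
    using CG C z by (intro suminf_nonneg) (auto simp: sums_iff)
  then have "0 \<le> G - b 0" using CG by (simp add: sums_iff)
  then have G_nonneg: "0 \<le> G" using b[of 0] by simp
  have "(\<lambda>n. w n m * z ^ n) sums (r m * G ^ m)" for m
  proof -
    have "(\<lambda>n. r m * ((\<Sum>j\<le>m. of_nat (m choose j) * b 0 ^ (m - j) * fps_nth (C ^ j) n) * z ^ n))
        = (\<lambda>n. w n m * z ^ n)"
      by (simp only: mult.assoc[symmetric] binomial_bell_coeff w_def C_def)
    then show ?thesis
      using sums_mult[OF sums_binomial_fps_power[OF C z CG, of m "b 0"], of "r m"]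
      by (simp only: diff_add_cancel)
  qed
  then have "ennreal (r m * G ^ m) = (\<Sum>n. ennreal (w n m * z ^ n))" for m
    using w z by (intro suminf_ennreal_eq[symmetric]) auto
  moreover have "ennreal (\<Sum>m. r m * G ^ m) = (\<Sum>m. ennreal (r m * G ^ m))"
    using r G_nonneg summable by (intro suminf_ennreal2[symmetric]) auto
  ultimately have "ennreal (\<Sum>m. r m * G ^ m) = (\<Sum>m. \<Sum>n. ennreal (w n m * z ^ n))"
    by simp
  also have "\<dots> = (\<Sum>n. \<Sum>m. ennreal (w n m * z ^ n))"
    by (rule ennreal_suminf_swap)
  also have "\<dots> = (\<Sum>n. ennreal (z ^ n) * (\<Sum>m. ennreal (w n m)))"
    using w z by (simp add: ennreal_mult' mult.commute)
  finally show ?thesis unfolding w_def .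
qed

lemma suminf_sum_mult_nonneg:
  fixes c :: "'i \<Rightarrow> real" and f :: "'i \<Rightarrow> nat \<Rightarrow> real"
  assumes J: "finite J" and c: "\<And>j. 0 \<le> c j" and f: "\<And>j m. 0 \<le> f j m"
    and summable: "summable (\<lambda>m. \<Sum>j\<in>J. c j * f j m)"
  shows "(\<Sum>m. \<Sum>j\<in>J. c j * f j m) = (\<Sum>j\<in>J. c j * (\<Sum>m. f j m))"
proof -
  have term_summable: "summable (\<lambda>m. c j * f j m)" if "j \<in> J" for j
  proof (rule summable_comparison_test'[OF summable])
    show "norm (c j * f j m) \<le> (\<Sum>j\<in>J. c j * f j m)" for m
      using J that c f member_le_sum[of j J "\<lambda>j. c j * f j m"] by simp
  qed
  have "(\<Sum>m. c j * f j m) = c j * (\<Sum>m. f j m)" if "j \<in> J" for j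
    using term_summable[OF that] by (cases "c j = 0") (auto dest: summable_mult_D intro: suminf_mult)
  then show ?thesis
    using term_summable by (simp add: suminf_sum)
qed

text \<open>Equality of the two generating functions on \<open>[0, 1)\<close> determines the coefficients; their
  finiteness comes from evaluating the expansion at \<open>z = 1/2\<close>.\<close>
lemma coeff_eq_of_composition:
  fixes c r b :: "nat \<Rightarrow> real" and G :: "real \<Rightarrow> real"
  assumes b: "\<And>i. 0 \<le> b i" and r: "\<And>m. 0 \<le> r m"
    and G: "\<And>z. 0 \<le> z \<Longrightarrow> z < 1 \<Longrightarrow> (\<lambda>i. b i / fact i * z ^ i) sums G z"
    and summable: "\<And>z. 0 \<le> z \<Longrightarrow> z < 1 \<Longrightarrow> summable (\<lambda>m. r m * G z ^ m)"
    and c: "\<And>z. 0 \<le> z \<Longrightarrow> z < 1 \<Longrightarrow> (\<lambda>n. c n * z ^ n) sums (\<Sum>m. r m * G z ^ m)"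
  shows "c n = (\<Sum>j\<le>n. bell_partial n j b * (\<Sum>m. composition_term r (b 0) n j m))"
proof -
  define w where "w n m = (\<Sum>j\<le>n. bell_partial n j b * composition_term r (b 0) n j m)" for n m
  have w: "0 \<le> w n m" for n m
    unfolding w_def using b r by (intro sum_nonneg mult_nonneg_nonneg bell_partial_nonneg composition_term_nonneg)
  note expansion = ennreal_suminf_composition[OF b r G summable, folded w_def]
  have "(\<Sum>m. ennreal (w n m)) < \<top>" for n
  proof -
    have "(\<Sum>n. ennreal ((1/2) ^ n) * (\<Sum>m. ennreal (w n m))) < \<top>"
      using expansion[of "1/2"] by (simp del: power_one_over) (metis ennreal_less_top)
    then have "ennreal ((1/2) ^ n) * (\<Sum>m. ennreal (w n m)) < \<top>" by (rule ennreal_suminf_lessD)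
    then have "(\<Sum>m. ennreal (w n m)) = 0 \<or> (\<Sum>m. ennreal (w n m)) < \<top>"
      by (simp add: ennreal_mult_less_top)
    then show ?thesis by (metis ennreal_zero_less_top)
  qed
  then have w_summable: "summable (w n)" for n
    using w by (intro summable_suminf_not_top) (auto simp: less_top)
  have w_sums: "(\<lambda>n. (\<Sum>m. w n m) * z ^ n) sums (\<Sum>m. r m * G z ^ m)" if z: "0 \<le> z" "z < 1" for z
  proof (rule sums_if_ennreal_suminf_eq)
    show "0 \<le> (\<Sum>m. w n m) * z ^ n" for n using w w_summable z by (simp add: suminf_nonneg)
    have "0 \<le> (\<Sum>i. b i / fact i * z ^ i)"
      using G[OF z] b z by (intro suminf_nonneg) (auto simp: sums_iff)
    then have "0 \<le> G z" using G[OF z] by (simp add: sums_iff)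
    then show "0 \<le> (\<Sum>m. r m * G z ^ m)" using summable[OF z] r by (simp add: suminf_nonneg)
    show "(\<Sum>n. ennreal ((\<Sum>m. w n m) * z ^ n)) = ennreal (\<Sum>m. r m * G z ^ m)"
      using expansion[OF z(1)] w w_summable z
      by (simp add: suminf_ennreal2 suminf_nonneg ennreal_mult' mult.commute)
  qed
  have "c n - (\<Sum>m. w n m) = 0"
  proof (rule powser_zero_imp_coeff_zero[of 1])
    fix z :: real assume "0 < z" "z < 1"
    then have z: "0 \<le> z" "z < 1" by simp_all
    show "(\<lambda>n. (c n - (\<Sum>m. w n m)) * z ^ n) sums 0"
      using sums_diff[OF c[OF z] w_sums[OF z]] by (simp add: left_diff_distrib)
  qed simp
  moreover have "(\<Sum>m. w n m) = (\<Sum>j\<le>n. bell_partial n j b * (\<Sum>m. composition_term r (b 0) n j m))"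
    unfolding w_def using b r w_summable[of n, unfolded w_def]
    by (intro suminf_sum_mult_nonneg bell_partial_nonneg composition_term_nonneg) auto
  ultimately show ?thesis by simp
qed

section \<open>The offspring generating function\<close>

definition offspring_pgf :: "real \<Rightarrow> real \<Rightarrow> real \<Rightarrow> real \<Rightarrow> real" where
  "offspring_pgf ps pb lam z = bernoulli_pgf ps z * zip_pgf pb lam z"

text \<open>The derivatives at \<open>0\<close> of \<open>offspring_pgf\<close>; the \<open>b\<^sub>i\<close> of the theorem are their
  \<open>s\<close>-averages.\<close>
definition offspring_coeff :: "real \<Rightarrow> real \<Rightarrow> real \<Rightarrow> nat \<Rightarrow> real" where
  "offspring_coeff ps pb lam i = (if i = 0 then (1 - ps) * ((1 - pb) + pb * exp (- lam))
     else if i = 1 then (1 - ps) * pb * exp (- lam) * lam + ps * ((1 - pb) + pb * exp (- lam))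
     else pb * lam ^ (i - 1) * exp (- lam) * ((1 - ps) * lam + real i * ps))"

lemma bernoulli_pgf_bounds:
  assumes "0 \<le> p" "p \<le> 1" "0 \<le> z" "z \<le> 1"
  shows "0 \<le> bernoulli_pgf p z" "bernoulli_pgf p z \<le> 1"
  using assms mult_left_le[of z p] by (simp_all add: bernoulli_pgf_def)

lemma zip_pgf_bounds:
  assumes "0 \<le> p" "p \<le> 1" "0 \<le> lam" "z \<le> 1"
  shows "0 \<le> zip_pgf p lam z" "zip_pgf p lam z \<le> 1"
proof -
  have "exp (- (lam * (1 - z))) \<le> 1" using assms by simp
  then show "0 \<le> zip_pgf p lam z" "zip_pgf p lam z \<le> 1"
    using assms mult_left_le[of "exp (- (lam * (1 - z)))" p]
    by (simp_all add: zip_pgf_eq add_nonneg_nonneg)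
qed

lemma offspring_pgf_bounds:
  assumes "0 \<le> ps" "ps \<le> 1" "0 \<le> pb" "pb \<le> 1" "0 \<le> lam" "0 \<le> z" "z \<le> 1"
  shows "0 \<le> offspring_pgf ps pb lam z" "offspring_pgf ps pb lam z \<le> 1"
  using bernoulli_pgf_bounds[of ps z] zip_pgf_bounds[of pb lam z] assms
  by (simp_all add: offspring_pgf_def mult_le_one)

lemma offspring_coeff_nonneg:
  "0 \<le> ps \<Longrightarrow> ps \<le> 1 \<Longrightarrow> 0 \<le> pb \<Longrightarrow> pb \<le> 1 \<Longrightarrow> 0 \<le> lam \<Longrightarrow> 0 \<le> offspring_coeff ps pb lam i"
  unfolding offspring_coeff_def by (auto intro!: mult_nonneg_nonneg add_nonneg_nonneg)

lemma offspring_coeff_sums: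
  "(\<lambda>i. offspring_coeff ps pb lam i / fact i * z ^ i) sums offspring_pgf ps pb lam z"
proof -
  have e: "(\<lambda>n. (lam * z) ^ n / fact n) sums exp (lam * z)"
    using exp_converges[of "lam * z"] by (simp add: divide_inverse mult.commute)
  have e1: "(\<lambda>n. if n = 0 then 0 else (lam * z) ^ (n - 1) / fact (n - 1)) sums exp (lam * z)"
  proof -
    have "(\<lambda>n. (\<lambda>n. if n = 0 then 0 else (lam * z) ^ (n - 1) / fact (n - 1)) (Suc n)) sums exp (lam * z)"
      using e by simp
    from sums_Suc_iff[THEN iffD1, OF this] show ?thesis by simp
  qed
  have "(\<lambda>i. (if i = 0 then (1 - ps) * (1 - pb) else 0)
        + (1 - ps) * pb * exp (- lam) * ((lam * z) ^ i / fact i)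
        + (if i = 1 then ps * (1 - pb) * z else 0)
        + ps * pb * exp (- lam) * z * (if i = 0 then 0 else (lam * z) ^ (i - 1) / fact (i - 1)))
     sums ((1 - ps) * (1 - pb) + (1 - ps) * pb * exp (- lam) * exp (lam * z) + ps * (1 - pb) * z
        + ps * pb * exp (- lam) * z * exp (lam * z))"
    by (intro sums_add sums_mult e e1 sums_single)
  moreover have "offspring_coeff ps pb lam i / fact i * z ^ i = (if i = 0 then (1 - ps) * (1 - pb) else 0)
        + (1 - ps) * pb * exp (- lam) * ((lam * z) ^ i / fact i)
        + (if i = 1 then ps * (1 - pb) * z else 0)
        + ps * pb * exp (- lam) * z * (if i = 0 then 0 else (lam * z) ^ (i - 1) / fact (i - 1))" for i
  proof -
    consider "i = 0" | "i = 1" | k where "i = Suc (Suc k)" by (cases i; cases "i - 1") auto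
    then show ?thesis
    proof cases
      case 3
      have "(fact (Suc (Suc k)) :: real) = real (Suc (Suc k)) * fact (Suc k)" by (rule fact_Suc)
      then show ?thesis using 3 unfolding offspring_coeff_def
        by (simp add: field_simps power_mult_distrib del: of_nat_Suc fact_Suc)
    qed (simp_all add: offspring_coeff_def algebra_simps)
  qed
  moreover have "(1 - ps) * (1 - pb) + (1 - ps) * pb * exp (- lam) * exp (lam * z) + ps * (1 - pb) * z
        + ps * pb * exp (- lam) * z * exp (lam * z) = offspring_pgf ps pb lam z"
    by (simp add: offspring_pgf_def bernoulli_pgf_def zip_pgf_def algebra_simps)
  ultimately show ?thesis by simp
qed

lemma offspring_coeff_le:
  assumes "0 \<le> ps" "ps \<le> 1" "0 \<le> pb" "pb \<le> 1" "0 \<le> lam"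
  shows "offspring_coeff ps pb lam i \<le> fact i * 2 ^ i"
proof -
  let ?f = "\<lambda>i. offspring_coeff ps pb lam i / fact i * (1/2) ^ i"
  have nonneg: "0 \<le> ?f n" for n using offspring_coeff_nonneg[OF assms] by simp
  have "?f i \<le> suminf ?f"
    using sum_le_suminf[of ?f "{i}"] offspring_coeff_sums nonneg by (simp add: sums_iff)
  also have "\<dots> \<le> 1"
    using offspring_pgf_bounds[OF assms, of "1/2"] sums_unique[OF offspring_coeff_sums] by simp
  finally show ?thesis by (simp add: field_simps)
qed

lemma sums_integral_nonneg:
  fixes f :: "nat \<Rightarrow> 'a \<Rightarrow> real"
  assumes f: "\<And>i. integrable M (f i)" "\<And>i x. x \<in> space M \<Longrightarrow> 0 \<le> f i x"
    and g: "integrable M g" and sums: "\<And>x. x \<in> space M \<Longrightarrow> (\<lambda>i. f i x) sums g x"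
  shows "(\<lambda>i. \<integral>x. f i x \<partial>M) sums (\<integral>x. g x \<partial>M)"
proof (rule sums_if_ennreal_suminf_eq)
  have g_nonneg: "0 \<le> g x" if "x \<in> space M" for x
    using sums[OF that] f(2)[OF that] by (metis sums_iff suminf_nonneg)
  show "0 \<le> (\<integral>x. f i x \<partial>M)" for i using f by (intro integral_nonneg_AE AE_I2) auto
  show "0 \<le> (\<integral>x. g x \<partial>M)" using g_nonneg by (intro integral_nonneg_AE AE_I2) auto
  have "(\<Sum>i. ennreal (\<integral>x. f i x \<partial>M)) = (\<Sum>i. \<integral>\<^sup>+x. ennreal (f i x) \<partial>M)"
    using f by (simp add: nn_integral_eq_integral AE_I2)
  also have "\<dots> = (\<integral>\<^sup>+x. (\<Sum>i. ennreal (f i x)) \<partial>M)"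
    using f by (intro nn_integral_suminf[symmetric]) auto
  also have "\<dots> = (\<integral>\<^sup>+x. ennreal (g x) \<partial>M)"
    using f sums by (intro nn_integral_cong suminf_ennreal_eq) auto
  also have "\<dots> = ennreal (\<integral>x. g x \<partial>M)"
    using g g_nonneg by (simp add: nn_integral_eq_integral AE_I2)
  finally show "(\<Sum>i. ennreal (\<integral>x. f i x \<partial>M)) = ennreal (\<integral>x. g x \<partial>M)" .
qed

lemma integral_offspring_coeff_sums:
  fixes ps pb lam :: "'a \<Rightarrow> real"
  assumes s: "prob_space s"
    and [measurable]: "ps \<in> borel_measurable s" "pb \<in> borel_measurable s" "lam \<in> borel_measurable s"
    and range: "\<And>x. x \<in> space s \<Longrightarrow> 0 \<le> ps x \<and> ps x \<le> 1 \<and> 0 \<le> pb x \<and> pb x \<le> 1 \<and> 0 \<le> lam x"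
    and z: "0 \<le> z" "z \<le> 1"
  shows "(\<lambda>i. (\<integral>x. offspring_coeff (ps x) (pb x) (lam x) i \<partial>s) / fact i * z ^ i) sums
      (\<integral>x. offspring_pgf (ps x) (pb x) (lam x) z \<partial>s)"
proof -
  interpret prob_space s by (rule s)
  have coeff_integrable: "integrable s (\<lambda>x. offspring_coeff (ps x) (pb x) (lam x) i)" for i
  proof (rule integrable_const_bound[where B="fact i * 2 ^ i"])
    show "AE x in s. norm (offspring_coeff (ps x) (pb x) (lam x) i) \<le> fact i * 2 ^ i"
      using range offspring_coeff_nonneg offspring_coeff_le by (intro AE_I2) simp
  qed (simp add: offspring_coeff_def)
  have "integrable s (\<lambda>x. offspring_pgf (ps x) (pb x) (lam x) z)"
  proof (rule integrable_const_bound[where B=1])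
    show "AE x in s. norm (offspring_pgf (ps x) (pb x) (lam x) z) \<le> 1"
      using range offspring_pgf_bounds z by (intro AE_I2) simp
  qed (simp add: offspring_pgf_def bernoulli_pgf_def zip_pgf_def)
  then have "(\<lambda>i. \<integral>x. offspring_coeff (ps x) (pb x) (lam x) i / fact i * z ^ i \<partial>s) sums
      (\<integral>x. offspring_pgf (ps x) (pb x) (lam x) z \<partial>s)"
    using coeff_integrable range offspring_coeff_nonneg z
    by (intro sums_integral_nonneg offspring_coeff_sums) auto
  then show ?thesis by simp
qed

section \<open>Intensities as limits of difference quotients of PGFLs\<close>

definition inv_Suc :: "nat \<Rightarrow> real" where
  "inv_Suc k = 1 / real (Suc k)"

lemma inv_Suc_pos: "0 < inv_Suc k" and inv_Suc_le_1: "inv_Suc k \<le> 1"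
  by (simp_all add: inv_Suc_def)

lemma inv_Suc_antimono: "k \<le> l \<Longrightarrow> inv_Suc l \<le> inv_Suc k"
  by (simp add: inv_Suc_def frac_le)

lemma inv_Suc_tendsto_0: "inv_Suc \<longlonglongrightarrow> 0"
  unfolding inv_Suc_def using LIMSEQ_Suc[OF lim_const_over_n[of 1]] by simp

lemma SUP_ennreal_incseq_tendsto:
  fixes f :: "nat \<Rightarrow> real"
  assumes "\<And>k. f k \<le> f (Suc k)" "f \<longlonglongrightarrow> l"
  shows "(SUP k. ennreal (f k)) = ennreal l"
  using assms by (intro SUP_Lim tendsto_ennrealI) (auto intro!: incseq_SucI ennreal_leI)

lemma SUP_mult_incseq_ennreal:
  fixes x y :: "nat \<Rightarrow> ennreal"
  assumes x: "incseq x" and y: "incseq y"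
  shows "(SUP k. x k * y k) = (SUP k. x k) * (SUP k. y k)"
proof (rule antisym)
  show "(SUP k. x k * y k) \<le> (SUP k. x k) * (SUP k. y k)"
    by (rule SUP_least) (intro mult_mono SUP_upper; simp)
  have "(SUP k. x k) * (SUP k. y k) = (SUP j. SUP i. x i * y j)"
    by (simp add: SUP_mult_left_ennreal SUP_mult_right_ennreal)
  also have "\<dots> \<le> (SUP k. x k * y k)"
  proof (intro SUP_least)
    fix i j
    have "x i * y j \<le> x (max i j) * y (max i j)"
      by (intro mult_mono) (auto intro: incseqD[OF x] incseqD[OF y])
    also have "\<dots> \<le> (SUP k. x k * y k)" by (rule SUP_upper) simp
    finally show "x i * y j \<le> (SUP k. x k * y k)" .
  qed
  finally show "(SUP k. x k) * (SUP k. y k) \<le> (SUP k. x k * y k)" .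
qed

lemma SUP_integral_incseq:
  fixes f :: "nat \<Rightarrow> 'a \<Rightarrow> real"
  assumes int: "\<And>k. integrable M (f k)" and nonneg: "\<And>k x. x \<in> space M \<Longrightarrow> 0 \<le> f k x"
    and mono: "\<And>k x. x \<in> space M \<Longrightarrow> f k x \<le> f (Suc k) x"
    and lim: "\<And>x. x \<in> space M \<Longrightarrow> (\<lambda>k. f k x) \<longlonglongrightarrow> g x"
  shows "(SUP k. ennreal (\<integral>x. f k x \<partial>M)) = (\<integral>\<^sup>+x. ennreal (g x) \<partial>M)"
proof -
  have "(SUP k. ennreal (\<integral>x. f k x \<partial>M)) = (SUP k. \<integral>\<^sup>+x. ennreal (f k x) \<partial>M)"
    using int nonneg by (simp add: nn_integral_eq_integral AE_I2)
  also have "\<dots> = (\<integral>\<^sup>+x. (SUP k. ennreal (f k x)) \<partial>M)"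
    using int mono
    by (intro nn_integral_monotone_convergence_SUP_AE[symmetric] AE_I2) (auto intro: ennreal_leI)
  also have "\<dots> = (\<integral>\<^sup>+x. ennreal (g x) \<partial>M)"
    using mono lim by (intro nn_integral_cong SUP_ennreal_incseq_tendsto)
  finally show ?thesis .
qed

lemma pgfl_indicator_quotient:
  assumes pp: "point_process X P" and B: "B \<in> sets X" and t: "0 < t" "t \<le> 1"
  shows "(\<integral>\<^sup>+M. ennreal (\<Sum>i<cnt B M. (1 - t) ^ i) \<partial>P)
    = ennreal ((1 - pgfl P (\<lambda>x. 1 - t * indicator B x)) / t)"
proof -
  have sP: "sets P = sets (cfgM X)" using pp by (simp add: point_process_def)
  interpret prob_space P using pp by (simp add: point_process_def)
  have cnt_B: "cnt B \<in> P \<rightarrow>\<^sub>M count_space UNIV"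
    unfolding measurable_cong_sets[OF sP refl] using B by simp
  define e where "e M = (1 - t) ^ cnt B M" for M
  have [measurable]: "e \<in> borel_measurable P"
    unfolding e_def by (rule measurable_compose[OF cnt_B]) simp
  have e_bounds: "0 \<le> e M" "e M \<le> 1" for M using t by (auto simp: e_def power_le_one)
  have "integrable P e"
    by (rule integrable_const_bound[where B=1]) (use e_bounds in \<open>auto simp: e_def\<close>)
  then have "(\<integral>M. (1 - e M) / t \<partial>P) = (1 - (\<integral>M. e M \<partial>P)) / t"
    by (simp add: prob_space)
  moreover have "integrable P (\<lambda>M. (1 - e M) / t)"
    using \<open>integrable P e\<close> by auto
  moreover have "(\<Sum>i<cnt B M. (1 - t) ^ i) = (1 - e M) / t" for M
    using one_diff_power_eq[of "1 - t" "cnt B M"] t by (simp add: e_def field_simps)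
  moreover have "(\<integral>M. e M \<partial>P) = pgfl P (\<lambda>x. 1 - t * indicator B x)"
  proof -
    have "prod_mset (image_mset (\<lambda>x. 1 - t * indicator B x) M) = (1 - t) ^ cnt B M" for M
      by (induction M) (auto simp: indicator_def)
    then show ?thesis unfolding pgfl_def e_def by simp
  qed
  ultimately show ?thesis
    using e_bounds t by (simp add: nn_integral_eq_integral AE_I2)
qed

lemma intensity_eq_SUP_pgfl:
  assumes pp: "point_process X P" and B: "B \<in> sets X"
  shows "intensity P B = (SUP k. ennreal ((1 - pgfl P (\<lambda>x. 1 - inv_Suc k * indicator B x)) / inv_Suc k))"
proof -
  have sP: "sets P = sets (cfgM X)" using pp by (simp add: point_process_def)
  have [measurable]: "cnt B \<in> P \<rightarrow>\<^sub>M count_space UNIV"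
    unfolding measurable_cong_sets[OF sP refl] using B by simp
  define F where "F k M = ennreal (\<Sum>i<cnt B M. (1 - inv_Suc k) ^ i)" for k M
  have mono: "(\<Sum>i<n. (1 - inv_Suc k) ^ i) \<le> (\<Sum>i<n. (1 - inv_Suc (Suc k)) ^ i)" for n k
    using inv_Suc_antimono[of k "Suc k"] inv_Suc_le_1[of k] by (intro sum_mono power_mono) auto
  have "(SUP k. F k M) = of_nat (cnt B M)" for M
  proof -
    have "(\<lambda>k. \<Sum>i<cnt B M. (1 - inv_Suc k) ^ i) \<longlonglongrightarrow> (\<Sum>i<cnt B M. (1 - 0) ^ i)"
      by (intro tendsto_intros inv_Suc_tendsto_0)
    then show ?thesis
      unfolding F_def
      using SUP_ennreal_incseq_tendsto[of "\<lambda>k. \<Sum>i<cnt B M. (1 - inv_Suc k) ^ i", OF mono]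
      by (simp add: ennreal_of_nat_eq_real_of_nat)
  qed
  then have "intensity P B = (\<integral>\<^sup>+M. (SUP k. F k M) \<partial>P)" by (simp add: intensity_def)
  also have "\<dots> = (SUP k. integral\<^sup>N P (F k))"
    by (rule nn_integral_monotone_convergence_SUP)
       (auto simp: F_def incseq_Suc_iff le_fun_def intro!: ennreal_leI mono)
  also have "\<dots> = (SUP k. ennreal ((1 - pgfl P (\<lambda>x. 1 - inv_Suc k * indicator B x)) / inv_Suc k))"
    unfolding F_def using inv_Suc_pos inv_Suc_le_1 by (simp add: pgfl_indicator_quotient[OF pp B])
  finally show ?thesis .
qed

lemma power_series_quotient_sums:
  fixes r :: "nat \<Rightarrow> real"
  assumes r: "r sums 1" "\<And>m. 0 \<le> r m" and c: "0 \<le> c" "c \<le> 1" and t: "0 < t" "1 - c = t * A"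
  shows "(\<lambda>m. r m * A * (\<Sum>i<m. c ^ i)) sums ((1 - (\<Sum>m. r m * c ^ m)) / t)"
proof -
  have sm: "summable (\<lambda>m. r m * c ^ m)"
  proof (rule summable_comparison_test'[OF sums_summable[OF r(1)]])
    show "norm (r m * c ^ m) \<le> r m" for m
      using r(2)[of m] c by (simp add: mult_left_le power_le_one)
  qed
  have "r m - r m * c ^ m = t * (r m * A * (\<Sum>i<m. c ^ i))" for m
  proof -
    have "r m - r m * c ^ m = r m * ((1 - c) * (\<Sum>i<m. c ^ i))"
      unfolding one_diff_power_eq[symmetric] by (simp add: right_diff_distrib)
    then show ?thesis by (simp add: t(2))
  qed
  then have "(\<lambda>m. t * (r m * A * (\<Sum>i<m. c ^ i))) sums (1 - (\<Sum>m. r m * c ^ m))"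
    using sums_diff[OF r(1) summable_sums[OF sm]] by simp
  from sums_divide[OF this, of t] show ?thesis
    using t(1) by simp
qed

text \<open>Monotone convergence on both sides of \<open>(1 - \<Sum>\<^sub>m r m c\<^sub>k\<^sup>m) / t\<^sub>k = \<Sum>\<^sub>m r m A\<^sub>k \<Sum>\<^sub>i\<^sub><\<^sub>m c\<^sub>k\<^sup>i\<close>.\<close>
lemma SUP_power_series_quotient:
  fixes r A c t :: "nat \<Rightarrow> real"
  assumes r: "r sums 1" "\<And>m. 0 \<le> r m"
    and A: "incseq A" "\<And>k. 0 \<le> A k" "(SUP k. ennreal (A k)) = A_lim"
    and c: "incseq c" "\<And>k. 0 \<le> c k" "\<And>k. c k \<le> 1" "c \<longlonglongrightarrow> 1"
    and t: "\<And>k. 0 < t k" "\<And>k. 1 - c k = t k * A k"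
  shows "(SUP k. ennreal ((1 - (\<Sum>m. r m * c k ^ m)) / t k)) = (\<Sum>m. ennreal (real m * r m)) * A_lim"
proof -
  define S where "S m k = (\<Sum>i<m. c k ^ i)" for m k
  have S_nonneg: "0 \<le> S m k" for m k unfolding S_def using c by (auto intro!: sum_nonneg)
  have S_inc: "incseq (S m)" for m
    unfolding S_def incseq_def using c by (auto intro!: sum_mono power_mono incseqD[OF c(1)])
  have "ennreal ((1 - (\<Sum>m. r m * c k ^ m)) / t k) = (\<Sum>m. ennreal (r m * A k * S m k))" for k
    unfolding S_def using r(2) A(2) S_nonneg[unfolded S_def] c(2,3) t
    by (intro suminf_ennreal_eq[symmetric] power_series_quotient_sums[OF r]) auto
  then have "(SUP k. ennreal ((1 - (\<Sum>m. r m * c k ^ m)) / t k))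
      = (SUP k. \<Sum>m. ennreal (r m) * (ennreal (A k) * ennreal (S m k)))"
    using r(2) A(2) S_nonneg by (simp add: ennreal_mult mult.assoc)
  also have "\<dots> = (\<Sum>m. SUP k. ennreal (r m) * (ennreal (A k) * ennreal (S m k)))"
    using A(1) S_inc
    by (intro ennreal_suminf_SUP_eq[symmetric]) (auto simp: incseq_def intro!: mult_mono ennreal_leI)
  also have "\<dots> = (\<Sum>m. ennreal (real m * r m) * A_lim)"
  proof (rule suminf_cong)
    fix m
    have "(\<lambda>k. S m k) \<longlonglongrightarrow> (\<Sum>i<m. 1 ^ i)"
      unfolding S_def by (intro tendsto_intros c(4))
    then have "(SUP k. ennreal (S m k)) = ennreal (real m)"
      using S_inc by (subst SUP_ennreal_incseq_tendsto) (auto simp: incseq_def)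
    moreover have "(SUP k. ennreal (A k) * ennreal (S m k)) = (SUP k. ennreal (A k)) * (SUP k. ennreal (S m k))"
      using A(1) S_inc by (intro SUP_mult_incseq_ennreal) (auto simp: incseq_def intro: ennreal_leI)
    moreover have "(SUP k. ennreal (r m) * (ennreal (A k) * ennreal (S m k)))
        = ennreal (r m) * (SUP k. ennreal (A k) * ennreal (S m k))"
      by (simp add: SUP_mult_left_ennreal)
    ultimately show "(SUP k. ennreal (r m) * (ennreal (A k) * ennreal (S m k))) = ennreal (real m * r m) * A_lim"
      using A(3) r(2)[of m] by (simp add: ennreal_mult[of "real m" "r m"] mult_ac)
  qed
  finally show ?thesis by simp
qed

lemma exp_quotient_antimono:
  fixes b s t :: real
  assumes b: "0 \<le> b" and s: "0 < s" and st: "s \<le> t"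
  shows "(1 - exp (- (t * b))) / t \<le> (1 - exp (- (s * b))) / s"
proof -
  define \<theta> where "\<theta> = s / t"
  have t: "0 < t" using s st by simp
  have \<theta>: "0 \<le> \<theta>" "\<theta> \<le> 1" using s st t by (auto simp: \<theta>_def)
  have conv: "exp ((1 - \<theta>) *\<^sub>R 0 + \<theta> *\<^sub>R (- (t * b))) \<le> (1 - \<theta>) * exp 0 + \<theta> * exp (- (t * b))"
    by (rule convex_onD[OF exp_convex \<theta>]) auto
  have "\<theta> * (t * b) = s * b" using t by (simp add: \<theta>_def)
  then have "(1 - \<theta>) *\<^sub>R 0 + \<theta> *\<^sub>R (- (t * b)) = - (s * b)" by simp
  then have "exp (- (s * b)) \<le> 1 - \<theta> + \<theta> * exp (- (t * b))"
    using conv by (simp only:) simp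
  then have "\<theta> * (1 - exp (- (t * b))) \<le> 1 - exp (- (s * b))" by (simp add: algebra_simps)
  then have "s * ((1 - exp (- (t * b))) / t) \<le> 1 - exp (- (s * b))" by (simp add: \<theta>_def)
  then show ?thesis using s by (simp add: field_simps)
qed

lemma exp_quotient_tendsto: "(\<lambda>k. (1 - exp (- (inv_Suc k * b))) / inv_Suc k) \<longlonglongrightarrow> b"
proof -
  have "((\<lambda>x. exp (- (x * b))) has_real_derivative (exp (- (0 * b)) * (- b))) (at 0)"
    by (auto intro!: derivative_eq_intros)
  then have d: "((\<lambda>h. (exp (- (h * b)) - 1) / h) \<longlongrightarrow> - b) (at 0)"
    by (simp add: DERIV_def)
  have "filterlim inv_Suc (at 0) sequentially"
    using inv_Suc_tendsto_0 inv_Suc_pos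
    by (intro filterlim_atI) (auto intro!: always_eventually simp: less_imp_neq[symmetric])
  from filterlim_compose[OF d this]
  have "(\<lambda>k. (exp (- (inv_Suc k * b)) - 1) / inv_Suc k) \<longlonglongrightarrow> - b"
    by (simp add: o_def)
  from tendsto_minus[OF this] show ?thesis by (simp add: minus_divide_left)
qed

text \<open>The difference quotient of the offspring generating function at \<open>1\<close>, which increases to
  its derivative \<open>a + p b\<close> there.\<close>
lemma offspring_pgf_quotient_eq:
  "t \<noteq> 0 \<Longrightarrow> (1 - offspring_pgf a p b (1 - t)) / t
     = a * zip_pgf p b (1 - t) + p * ((1 - exp (- (t * b))) / t)"
  by (simp add: offspring_pgf_def bernoulli_pgf_def zip_pgf_eq field_simps)

context
  fixes a p b :: real
  assumes a: "0 \<le> a" "a \<le> 1" and p: "0 \<le> p" "p \<le> 1" and b: "0 \<le> b"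
begin

lemma offspring_pgf_mono:
  assumes "0 \<le> z" "z \<le> z'" "z' \<le> 1"
  shows "offspring_pgf a p b z \<le> offspring_pgf a p b z'"
proof -
  have "bernoulli_pgf a z \<le> bernoulli_pgf a z'"
    using a assms by (simp add: bernoulli_pgf_def mult_left_mono)
  moreover have "zip_pgf p b z \<le> zip_pgf p b z'"
    using p b assms by (simp add: zip_pgf_eq mult_left_mono mult_right_mono)
  ultimately show ?thesis
    unfolding offspring_pgf_def using a p b assms
    by (intro mult_mono bernoulli_pgf_bounds zip_pgf_bounds) auto
qed

lemma offspring_pgf_quotient_mono:
  "(1 - offspring_pgf a p b (1 - inv_Suc k)) / inv_Suc k
     \<le> (1 - offspring_pgf a p b (1 - inv_Suc (Suc k))) / inv_Suc (Suc k)"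
proof -
  have t: "0 < inv_Suc (Suc k)" "inv_Suc (Suc k) \<le> inv_Suc k"
    by (simp_all add: inv_Suc_pos inv_Suc_antimono)
  have "zip_pgf p b (1 - inv_Suc k) \<le> zip_pgf p b (1 - inv_Suc (Suc k))"
    using t p b by (simp add: zip_pgf_eq mult_left_mono mult_right_mono)
  moreover have "(1 - exp (- (inv_Suc k * b))) / inv_Suc k \<le> (1 - exp (- (inv_Suc (Suc k) * b))) / inv_Suc (Suc k)"
    using b t by (rule exp_quotient_antimono)
  moreover have ne: "inv_Suc k \<noteq> 0" "inv_Suc (Suc k) \<noteq> 0"
    using inv_Suc_pos by (metis less_irrefl)+
  ultimately show ?thesis
    using a p by (simp only: offspring_pgf_quotient_eq ne) (intro add_mono mult_left_mono)
qed

lemma offspring_pgf_quotient_tendsto: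
  "(\<lambda>k. (1 - offspring_pgf a p b (1 - inv_Suc k)) / inv_Suc k) \<longlonglongrightarrow> a + p * b"
proof -
  have "(\<lambda>k. a * zip_pgf p b (1 - inv_Suc k) + p * ((1 - exp (- (inv_Suc k * b))) / inv_Suc k))
      \<longlonglongrightarrow> a * zip_pgf p b (1 - 0) + p * b"
    unfolding zip_pgf_eq by (intro tendsto_intros inv_Suc_tendsto_0 exp_quotient_tendsto)
  moreover have "inv_Suc k \<noteq> 0" for k
    using inv_Suc_pos by (metis less_irrefl)
  ultimately show ?thesis
    by (simp add: offspring_pgf_quotient_eq zip_pgf_eq)
qed

lemma offspring_pgf_tendsto_1: "(\<lambda>k. offspring_pgf a p b (1 - inv_Suc k)) \<longlonglongrightarrow> 1"
proof -
  have "(\<lambda>k. offspring_pgf a p b (1 - inv_Suc k)) \<longlonglongrightarrow> offspring_pgf a p b (1 - 0)"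
    unfolding offspring_pgf_def bernoulli_pgf_def zip_pgf_eq
    by (intro tendsto_intros inv_Suc_tendsto_0)
  then show ?thesis by (simp add: offspring_pgf_def bernoulli_pgf_def zip_pgf_eq)
qed

end

context
  fixes s :: "'a measure" and a p b :: "'a \<Rightarrow> real"
  assumes s: "prob_space s"
    and [measurable]: "a \<in> borel_measurable s" "p \<in> borel_measurable s" "b \<in> borel_measurable s"
    and range: "\<And>x. x \<in> space s \<Longrightarrow> 0 \<le> a x \<and> a x \<le> 1 \<and> 0 \<le> p x \<and> p x \<le> 1 \<and> 0 \<le> b x"
begin

lemma integral_offspring_pgf_near_1:
  defines "c \<equiv> \<lambda>k. \<integral>x. offspring_pgf (a x) (p x) (b x) (1 - inv_Suc k) \<partial>s"
  shows "incseq c" "\<And>k. 0 \<le> c k" "\<And>k. c k \<le> 1" "c \<longlonglongrightarrow> 1"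
proof -
  interpret prob_space s by (rule s)
  define g where "g k x = offspring_pgf (a x) (p x) (b x) (1 - inv_Suc k)" for k x
  have bounds: "0 \<le> g k x" "g k x \<le> 1" if "x \<in> space s" for k x
    unfolding g_def using range[OF that] inv_Suc_pos[of k] inv_Suc_le_1[of k]
    by (auto intro!: offspring_pgf_bounds)
  have mono: "g k x \<le> g (Suc k) x" if "x \<in> space s" for k x
    unfolding g_def using range[OF that] inv_Suc_le_1[of k] inv_Suc_pos[of "Suc k"]
      inv_Suc_antimono[of k "Suc k"]
    by (intro offspring_pgf_mono) auto
  have [measurable]: "g k \<in> borel_measurable s" for k
    unfolding g_def offspring_pgf_def bernoulli_pgf_def zip_pgf_def by measurable
  have int: "integrable s (g k)" for k
    by (rule integrable_const_bound[where B=1]) (use bounds in \<open>auto intro!: AE_I2\<close>)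
  show inc: "incseq c"
    unfolding c_def g_def[symmetric] incseq_Suc_iff
    by (intro allI integral_mono_AE int AE_I2 mono)
  show nonneg: "0 \<le> c k" for k
    unfolding c_def g_def[symmetric] by (intro integral_nonneg_AE AE_I2) (simp add: bounds)
  show "c k \<le> 1" for k
    using integral_mono_AE[OF int integrable_const[of 1] AE_I2[OF bounds(2)], of k] prob_space
    by (simp add: c_def g_def)
  have "(SUP k. ennreal (c k)) = (\<integral>\<^sup>+x. ennreal 1 \<partial>s)"
    unfolding c_def g_def[symmetric]
  proof (rule SUP_integral_incseq[OF int])
    show "(\<lambda>k. g k x) \<longlonglongrightarrow> 1" if "x \<in> space s" for x
      unfolding g_def using range[OF that] by (intro offspring_pgf_tendsto_1) auto
  qed (simp_all add: bounds mono)
  then have "(SUP k. ennreal (c k)) = ennreal 1" by (simp add: emeasure_space_1)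
  moreover have "(\<lambda>k. ennreal (c k)) \<longlonglongrightarrow> (SUP k. ennreal (c k))"
    using inc by (intro LIMSEQ_SUP) (auto simp: incseq_def intro: ennreal_leI)
  ultimately have "(\<lambda>k. ennreal (c k)) \<longlonglongrightarrow> ennreal 1" by (simp only:)
  then show "c \<longlonglongrightarrow> 1"
    using nonneg by (subst (asm) tendsto_ennreal_iff) (auto intro: always_eventually)
qed

lemma integral_offspring_pgf_quotient:
  defines "A \<equiv> \<lambda>k. \<integral>x. (1 - offspring_pgf (a x) (p x) (b x) (1 - inv_Suc k)) / inv_Suc k \<partial>s"
  shows "incseq A" "\<And>k. 0 \<le> A k" "(SUP k. ennreal (A k)) = (\<integral>\<^sup>+x. ennreal (a x + p x * b x) \<partial>s)"
    "\<And>k. 1 - (\<integral>x. offspring_pgf (a x) (p x) (b x) (1 - inv_Suc k) \<partial>s) = inv_Suc k * A k"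
proof -
  interpret prob_space s by (rule s)
  define q where "q k x = (1 - offspring_pgf (a x) (p x) (b x) (1 - inv_Suc k)) / inv_Suc k" for k x
  have q_bounds: "0 \<le> q k x" "q k x \<le> 1 / inv_Suc k" if "x \<in> space s" for k x
    using offspring_pgf_bounds[of "a x" "p x" "b x" "1 - inv_Suc k"] range[OF that]
      inv_Suc_pos[of k] inv_Suc_le_1[of k]
    by (auto simp: q_def divide_right_mono)
  have mono: "q k x \<le> q (Suc k) x" if "x \<in> space s" for k x
    unfolding q_def using range[OF that] by (intro offspring_pgf_quotient_mono) auto
  have [measurable]: "q k \<in> borel_measurable s" for k
    unfolding q_def offspring_pgf_def bernoulli_pgf_def zip_pgf_def by measurable
  have int: "integrable s (q k)" for k
    by (rule integrable_const_bound[where B="1 / inv_Suc k"]) (use q_bounds in \<open>auto intro!: AE_I2\<close>)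
  show "incseq A"
    unfolding A_def q_def[symmetric] incseq_Suc_iff
    by (intro allI integral_mono_AE int AE_I2 mono)
  show "0 \<le> A k" for k
    unfolding A_def q_def[symmetric] by (intro integral_nonneg_AE AE_I2) (simp add: q_bounds)
  show "(SUP k. ennreal (A k)) = (\<integral>\<^sup>+x. ennreal (a x + p x * b x) \<partial>s)"
    unfolding A_def q_def[symmetric]
  proof (rule SUP_integral_incseq[OF int])
    show "(\<lambda>k. q k x) \<longlonglongrightarrow> a x + p x * b x" if "x \<in> space s" for x
      unfolding q_def using range[OF that] by (intro offspring_pgf_quotient_tendsto) auto
  qed (simp_all add: q_bounds mono)
  show "1 - (\<integral>x. offspring_pgf (a x) (p x) (b x) (1 - inv_Suc k) \<partial>s) = inv_Suc k * A k" for k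
  proof -
    have "offspring_pgf (a x) (p x) (b x) (1 - inv_Suc k) = 1 - inv_Suc k * q k x" for x
      using inv_Suc_pos[of k] by (simp add: q_def)
    then have "(\<integral>x. offspring_pgf (a x) (p x) (b x) (1 - inv_Suc k) \<partial>s) = (\<integral>x. 1 - inv_Suc k * q k x \<partial>s)"
      by simp
    also have "\<dots> = 1 - inv_Suc k * (\<integral>x. q k x \<partial>s)"
      using int[of k] by (simp add: Bochner_Integration.integral_diff prob_space)
    finally show ?thesis by (simp add: A_def q_def)
  qed
qed

end

lemma integral_one_minus_indicator:
  assumes "prob_space M" "B \<in> sets M"
  shows "(\<integral>y. 1 - t * indicator B y \<partial>M) = 1 - t * measure M B"
proof -
  interpret prob_space M by fact
  have "integrable M (\<lambda>y. t * indicator B y :: real)"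
    using assms(2) by (simp add: integrable_indicator_iff emeasure_eq_measure)
  then show ?thesis
    using assms(2) by (simp add: Bochner_Integration.integral_diff prob_space)
qed

lemma prob_kernel_at:
  assumes "K \<in> X \<rightarrow>\<^sub>M prob_algebra X" "x \<in> space X"
  shows "prob_space (K x)" "sets (K x) = sets X"
  using measurable_space[OF assms] by (auto simp: space_prob_algebra)

section \<open>The predicted process\<close>

text \<open>Hypotheses (i)--(v) of the theorem over an arbitrary measurable state space \<open>XM\<close>.\<close>
locale spawning_prediction =
  fixes XM :: "'a measure" and rho :: "nat pmf" and s :: "'a measure"
    and ps pb lam :: "'a \<Rightarrow> real" and fs sb :: "'a \<Rightarrow> 'a measure"
    and Ppred :: "'a multiset measure"
  assumes s_prob: "prob_space s" and s_sets: "sets s = sets XM"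
    and ps_meas: "ps \<in> borel_measurable XM" and pb_meas: "pb \<in> borel_measurable XM"
    and lam_meas: "lam \<in> borel_measurable XM"
    and range: "\<And>x. x \<in> space XM \<Longrightarrow> 0 \<le> ps x \<and> ps x \<le> 1 \<and> 0 \<le> pb x \<and> pb x \<le> 1 \<and> 0 \<le> lam x"
    and fs_kernel: "fs \<in> XM \<rightarrow>\<^sub>M prob_algebra XM" and sb_kernel: "sb \<in> XM \<rightarrow>\<^sub>M prob_algebra XM"
    and pred_pp: "point_process XM Ppred"
    and pred_pgfl: "\<And>h. h \<in> borel_measurable XM \<Longrightarrow> (\<forall>x\<in>space XM. \<bar>h x\<bar> \<le> 1) \<Longrightarrow>
        pgfl Ppred h = pgfl (iid_law XM rho s)
          (\<lambda>x. pgfl (bernoulli_law XM (ps x) (fs x)) h * pgfl (zip_law XM (pb x) (lam x) (sb x)) h)"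
begin

declare ps_meas [measurable] pb_meas [measurable] lam_meas [measurable]

lemma space_s: "space s = space XM"
  using s_sets by (rule sets_eq_imp_space_eq)

lemma measurable_wrt_s [measurable]:
  "ps \<in> borel_measurable s" "pb \<in> borel_measurable s" "lam \<in> borel_measurable s"
  by (simp_all add: measurable_cong_sets[OF s_sets refl])

lemma measurable_offspring_pgf [measurable]:
  "(\<lambda>x. offspring_pgf (ps x) (pb x) (lam x) z) \<in> borel_measurable XM"
  unfolding offspring_pgf_def bernoulli_pgf_def zip_pgf_def by measurable

definition offspring_moment :: "nat \<Rightarrow> real" where
  "offspring_moment i = (\<integral>x. offspring_coeff (ps x) (pb x) (lam x) i \<partial>s)"

lemma pgfl_pred:
  assumes h: "h \<in> borel_measurable XM" "\<And>x. x \<in> space XM \<Longrightarrow> 0 \<le> h x \<and> h x \<le> 1"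
    and g: "g \<in> borel_measurable XM"
    and g_eq: "\<And>x. x \<in> space XM \<Longrightarrow>
      g x = bernoulli_pgf (ps x) (\<integral>y. h y \<partial>fs x) * zip_pgf (pb x) (lam x) (\<integral>y. h y \<partial>sb x)"
  shows "pgfl Ppred h = (\<Sum>m. pmf rho m * (\<integral>x. g x \<partial>s) ^ m)"
proof -
  have factors: "pgfl (bernoulli_law XM (ps x) (fs x)) h * pgfl (zip_law XM (pb x) (lam x) (sb x)) h = g x"
    and g_bounds: "0 \<le> g x \<and> g x \<le> 1" if x: "x \<in> space XM" for x
  proof -
    note F = prob_kernel_at[OF fs_kernel x] and S = prob_kernel_at[OF sb_kernel x]
    show "pgfl (bernoulli_law XM (ps x) (fs x)) h * pgfl (zip_law XM (pb x) (lam x) (sb x)) h = g x"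
      using range[OF x] by (simp add: g_eq[OF x] pgfl_bernoulli_law[OF _ _ F h] pgfl_zip_law[OF _ _ _ S h])
    show "0 \<le> g x \<and> g x \<le> 1"
      using unit_valued_integral(2,3)[OF F h] unit_valued_integral(2,3)[OF S h] range[OF x]
        bernoulli_pgf_bounds[of "ps x" "\<integral>y. h y \<partial>fs x"] zip_pgf_bounds[of "pb x" "lam x" "\<integral>y. h y \<partial>sb x"]
      by (simp add: g_eq[OF x] mult_le_one)
  qed
  have "pgfl Ppred h = pgfl (iid_law XM rho s)
      (\<lambda>x. pgfl (bernoulli_law XM (ps x) (fs x)) h * pgfl (zip_law XM (pb x) (lam x) (sb x)) h)"
    using h by (intro pred_pgfl) auto
  also have "\<dots> = pgfl (iid_law XM rho s) g"
    using factors by (intro pgfl_cong[OF sets_iid_law[OF s_prob s_sets]])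
  also have "\<dots> = (\<Sum>m. pmf rho m * (\<integral>x. g x \<partial>s) ^ m)"
    using g_bounds by (intro pgfl_iid_law[OF s_prob s_sets g])
  finally show ?thesis .
qed

lemma card_dist_pred:
  "card_dist Ppred n = (\<Sum>j\<le>n. bell_partial n j offspring_moment *
     (\<Sum>m. composition_term (pmf rho) (offspring_moment 0) n j m))"
proof (rule coeff_eq_of_composition)
  define G where "G z = (\<integral>x. offspring_pgf (ps x) (pb x) (lam x) z \<partial>s)" for z
  have range_s: "\<And>x. x \<in> space s \<Longrightarrow> 0 \<le> ps x \<and> ps x \<le> 1 \<and> 0 \<le> pb x \<and> pb x \<le> 1 \<and> 0 \<le> lam x"
    using range by (simp add: space_s)
  have G_bounds: "0 \<le> G z \<and> G z \<le> 1" if "0 \<le> z" "z \<le> 1" for z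
    unfolding G_def using that range
    by (intro conjI unit_valued_integral(2,3)[OF s_prob s_sets]) (auto intro!: offspring_pgf_bounds)
  show "0 \<le> offspring_moment i" for i
    unfolding offspring_moment_def using range_s
    by (intro integral_nonneg_AE AE_I2 offspring_coeff_nonneg) auto
  show "(\<lambda>i. offspring_moment i / fact i * z ^ i) sums G z" if "0 \<le> z" "z < 1" for z
    unfolding offspring_moment_def G_def using that range_s
    by (intro integral_offspring_coeff_sums[OF s_prob]) auto
  show "summable (\<lambda>m. pmf rho m * G z ^ m)" if "0 \<le> z" "z < 1" for z
    using G_bounds that by (intro summable_pmf_times_power) auto
  show "(\<lambda>n. card_dist Ppred n * z ^ n) sums (\<Sum>m. pmf rho m * G z ^ m)" if z: "0 \<le> z" "z < 1" for z
  proof -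
    have "pgfl Ppred (\<lambda>_. z) = (\<Sum>m. pmf rho m * G z ^ m)"
      unfolding G_def using z prob_space.prob_space[OF prob_kernel_at(1)[OF fs_kernel]]
        prob_space.prob_space[OF prob_kernel_at(1)[OF sb_kernel]]
      by (intro pgfl_pred) (auto simp: offspring_pgf_def bernoulli_pgf_def zip_pgf_def)
    then show ?thesis using pgfl_const_sums_card_dist[OF pred_pp, of z] z by simp
  qed
qed simp

lemma pgfl_pred_indicator:
  assumes B: "B \<in> sets XM" and t: "0 < t" "t \<le> 1"
  shows "pgfl Ppred (\<lambda>y. 1 - t * indicator B y) = (\<Sum>m. pmf rho m *
    (\<integral>x. offspring_pgf (ps x * measure (fs x) B) (pb x) (lam x * measure (sb x) B) (1 - t) \<partial>s) ^ m)"
proof (rule pgfl_pred)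
  have [measurable]: "(\<lambda>x. measure (fs x) B) \<in> borel_measurable XM" "(\<lambda>x. measure (sb x) B) \<in> borel_measurable XM"
    using B by (intro measurable_compose[OF measurable_prob_algebraD measurable_measure_subprob_algebra];
        simp add: fs_kernel sb_kernel)+
  show "(\<lambda>y. 1 - t * indicator B y) \<in> borel_measurable XM" using B by measurable
  show "0 \<le> 1 - t * indicator B y \<and> 1 - t * indicator B y \<le> 1" for y
    using t by (simp add: indicator_def)
  show "(\<lambda>x. offspring_pgf (ps x * measure (fs x) B) (pb x) (lam x * measure (sb x) B) (1 - t)) \<in> borel_measurable XM"
    unfolding offspring_pgf_def bernoulli_pgf_def zip_pgf_def by measurable
  fix x assume x: "x \<in> space XM"
  have "(\<integral>y. 1 - t * indicator B y \<partial>fs x) = 1 - t * measure (fs x) B"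
    "(\<integral>y. 1 - t * indicator B y \<partial>sb x) = 1 - t * measure (sb x) B"
    using prob_kernel_at[OF fs_kernel x] prob_kernel_at[OF sb_kernel x] B
    by (simp_all add: integral_one_minus_indicator)
  note integrals = this
  show "offspring_pgf (ps x * measure (fs x) B) (pb x) (lam x * measure (sb x) B) (1 - t)
      = bernoulli_pgf (ps x) (\<integral>y. 1 - t * indicator B y \<partial>fs x)
        * zip_pgf (pb x) (lam x) (\<integral>y. 1 - t * indicator B y \<partial>sb x)"
    unfolding integrals by (simp add: offspring_pgf_def bernoulli_pgf_def zip_pgf_eq algebra_simps)
qed

lemma intensity_pred:
  assumes B: "B \<in> sets XM"
  shows "intensity Ppred B = (\<integral>\<^sup>+x. ennreal (ps x * measure (fs x) B + pb x * lam x * measure (sb x) B)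
    \<partial>scale_measure (\<Sum>m. ennreal (real m * pmf rho m)) s)"
proof -
  define a where "a x = ps x * measure (fs x) B" for x
  define b where "b x = lam x * measure (sb x) B" for x
  have a_meas: "a \<in> borel_measurable s" and b_meas: "b \<in> borel_measurable s"
    unfolding a_def b_def measurable_cong_sets[OF s_sets refl]
    using B by (intro borel_measurable_times ps_meas lam_meas
        measurable_compose[OF measurable_prob_algebraD measurable_measure_subprob_algebra];
        simp add: fs_kernel sb_kernel)+
  have range_ab: "0 \<le> a x \<and> a x \<le> 1 \<and> 0 \<le> pb x \<and> pb x \<le> 1 \<and> 0 \<le> b x" if "x \<in> space s" for x
    using range[of x] prob_kernel_at[OF fs_kernel, of x] prob_kernel_at[OF sb_kernel, of x] that
    by (auto simp: a_def b_def space_s mult_le_one prob_space.prob_le_1)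
  note c = integral_offspring_pgf_near_1[OF s_prob a_meas measurable_wrt_s(2) b_meas range_ab]
    and A = integral_offspring_pgf_quotient[OF s_prob a_meas measurable_wrt_s(2) b_meas range_ab]
  have "intensity Ppred B = (SUP k. ennreal ((1 - pgfl Ppred (\<lambda>y. 1 - inv_Suc k * indicator B y)) / inv_Suc k))"
    by (rule intensity_eq_SUP_pgfl[OF pred_pp B])
  also have "\<dots> = (SUP k. ennreal ((1 - (\<Sum>m. pmf rho m *
      (\<integral>x. offspring_pgf (a x) (pb x) (b x) (1 - inv_Suc k) \<partial>s) ^ m)) / inv_Suc k))"
    using B inv_Suc_pos inv_Suc_le_1 by (simp add: pgfl_pred_indicator a_def b_def)
  also have "\<dots> = (\<Sum>m. ennreal (real m * pmf rho m)) * (\<integral>\<^sup>+x. ennreal (a x + pb x * b x) \<partial>s)"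
    by (rule SUP_power_series_quotient[OF pmf_nat_sums_1 pmf_nonneg A(1-3) c inv_Suc_pos A(4)])
  also have "\<dots> = (\<integral>\<^sup>+x. ennreal (a x + pb x * b x) \<partial>scale_measure (\<Sum>m. ennreal (real m * pmf rho m)) s)"
    using a_meas b_meas by (simp add: nn_integral_scale_measure)
  also have "\<dots> = (\<integral>\<^sup>+x. ennreal (ps x * measure (fs x) B + pb x * lam x * measure (sb x) B)
      \<partial>scale_measure (\<Sum>m. ennreal (real m * pmf rho m)) s)"
    by (simp add: a_def b_def mult_ac)
  finally show ?thesis .
qed

end

theorem theorem1:
  fixes X :: "'a::euclidean_space set"
    and rho :: "nat pmf"
    and s :: "'a measure"
    and ps pb lam :: "'a \<Rightarrow> real"
    and fs sb :: "'a \<Rightarrow> 'a measure"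
    and Pprev Ppred :: "'a multiset measure"
    and XM :: "'a measure"
    and b :: "nat \<Rightarrow> real"
  defines "XM \<equiv> restrict_space borel X"
  defines "b \<equiv> (\<lambda>i. if i = 0 then
              (\<integral>x. (1 - ps x) * ((1 - pb x) + pb x * exp (- lam x)) \<partial>s)
            else if i = 1 then
              (\<integral>x. (1 - ps x) * pb x * exp (- lam x) * lam x
                    + ps x * ((1 - pb x) + pb x * exp (- lam x)) \<partial>s)
            else
              (\<integral>x. pb x * lam x ^ (i - 1) * exp (- lam x)
                    * ((1 - ps x) * lam x + real i * ps x) \<partial>s))"
  assumes s_prob: "prob_space s" and s_sets: "sets s = sets XM"
    and prev: "Pprev = iid_law XM rho s"
    and ps_meas: "ps \<in> borel_measurable XM" and ps_range: "\<forall>x\<in>X. 0 \<le> ps x \<and> ps x \<le> 1"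
    and fs_kernel: "fs \<in> XM \<rightarrow>\<^sub>M prob_algebra XM"
    and pb_meas: "pb \<in> borel_measurable XM" and pb_range: "\<forall>x\<in>X. 0 \<le> pb x \<and> pb x \<le> 1"
    and lam_meas: "lam \<in> borel_measurable XM" and lam_nonneg: "\<forall>x\<in>X. 0 \<le> lam x"
    and sb_kernel: "sb \<in> XM \<rightarrow>\<^sub>M prob_algebra XM"
    and pred_pp: "point_process XM Ppred"
    and pred_pgfl: "\<forall>h \<in> borel_measurable XM. (\<forall>x\<in>X. \<bar>h x\<bar> \<le> 1) \<longrightarrow>
        pgfl Ppred h =
        pgfl Pprev (\<lambda>x. pgfl (bernoulli_law XM (ps x) (fs x)) h
                        * pgfl (zip_law XM (pb x) (lam x) (sb x)) h)"
  shows "(\<forall>B \<in> sets XM. intensity Ppred B =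
            (\<integral>\<^sup>+x. ennreal (ps x * measure (fs x) B + pb x * lam x * measure (sb x) B)
               \<partial>(scale_measure (\<Sum>m. ennreal (real m * pmf rho m)) s)))
       \<and> (\<forall>n. card_dist Ppred n =
            (\<Sum>j\<le>n. bell_partial n j b *
               (\<Sum>m. if j \<le> m then fact m / (fact n * fact (m - j)) * pmf rho m * b 0 ^ (m - j)
                     else 0)))"
proof -
  have space_XM: "space XM = X" unfolding XM_def by (simp add: space_restrict_space)
  interpret spawning_prediction XM rho s ps pb lam fs sb Ppred
  proof (rule spawning_prediction.intro)
    show "0 \<le> ps x \<and> ps x \<le> 1 \<and> 0 \<le> pb x \<and> pb x \<le> 1 \<and> 0 \<le> lam x" if "x \<in> space XM" for x
      using that ps_range pb_range lam_nonneg by (simp add: space_XM)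
    show "pgfl Ppred h = pgfl (iid_law XM rho s)
        (\<lambda>x. pgfl (bernoulli_law XM (ps x) (fs x)) h * pgfl (zip_law XM (pb x) (lam x) (sb x)) h)"
      if "h \<in> borel_measurable XM" "\<forall>x\<in>space XM. \<bar>h x\<bar> \<le> 1" for h
      using that pred_pgfl by (simp add: space_XM prev)
  qed fact+
  have b: "b = offspring_moment"
    by (auto simp: fun_eq_iff b_def offspring_moment_def offspring_coeff_def)
  show ?thesis
    unfolding b using intensity_pred card_dist_pred by (simp add: composition_term_def)
qed
end
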